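(* Let $n\ge3$, $\alpha\in(-\tfrac12,\infty)$, $p\in(1,\infty)$ with conjugate exponent $q=p/(p-1)$, and $f\in L^p(\mathbb{S}^{n-1},\mathbb{R}^n)$. Suppose $u=P_\alpha[f]$ and $u(0)=0$. Then for all $x\in\mathbb{B}^n$, $$|u(x)|\le G_p(|x|)\,\|f\|_{L^p},$$ where $G_p(0)=0$ and $G_p$ is differentiable on $(0,1)$ with $\frac{d}{dr}G_p(r)$ continuous on $(0,1)$. The inequality is sharp (the factor $G_p(|x|)$ cannot be replaced by a smaller one).
   Context: $\mathbb{B}^n$ is the open unit ball of $\mathbb{R}^n$, $\mathbb{S}^{n-1}$ the unit sphere with normalized surface measure $\sigma$, $e_n=(0,\dots,0,1)$. $C_{n,\alpha}=\frac{\Gamma(\frac n2+\alpha)\Gamma(1+\alpha)}{\Gamma(\frac n2)\Gamma(1+2\alpha)}$, $P_\alpha(x,\zeta)=C_{n,\alpha}\frac{(1-|x|^2)^{1+2\alpha}}{|x-\zeta|^{n+2\alpha}}$, $P_\alpha[f](x)=\int_{\mathbb{S}^{n-1}}P_\alpha(x,\zeta)f(\zeta)d\sigma(\zeta)$; $\|f\|_{L^p}=(\int|f|^pd\sigma)^{1/p}$ with $|\cdot|$ the Euclidean norm. For $r\in[0,1)$, $G_p(r)=\inf_{a\in[0,\infty)}\left(\int_{\mathbb{S}^{n-1}}|P_\alpha(re_n,\eta)-a|^q\,d\sigma(\eta)\right)^{1/q}$. *)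

theory Defs
  imports "HOL-Analysis.Analysis"
begin

text \<open>Normalized surface measure on the unit sphere of the Euclidean space \<open>real^'n\<close>,
  realised as the cone measure: the push-forward of the normalized Lebesgue measure on the
  unit ball under the radial projection \<open>x \<mapsto> x / |x|\<close> (the null point 0 is sent to an
  arbitrary point of the sphere).\<close>
definition sphere_sigma :: "('a::euclidean_space) measure" where
  "sphere_sigma =
     distr (uniform_measure lborel (ball 0 1)) (restrict_space borel (sphere 0 1))
       (\<lambda>x. if x = 0 then (SOME z. z \<in> sphere (0::'a) 1) else x /\<^sub>R norm x)"

definition C_const :: "nat \<Rightarrow> real \<Rightarrow> real" where
  "C_const n \<alpha> = Gamma (real n / 2 + \<alpha>) * Gamma (1 + \<alpha>) / (Gamma (real n / 2) * Gamma (1 + 2 * \<alpha>))"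

definition P_kernel :: "real \<Rightarrow> real^'n \<Rightarrow> real^'n \<Rightarrow> real" where
  "P_kernel \<alpha> x \<zeta> = C_const CARD('n) \<alpha> * (1 - norm x ^ 2) powr (1 + 2 * \<alpha>)
      / norm (x - \<zeta>) powr (real CARD('n) + 2 * \<alpha>)"

definition P_transform :: "real \<Rightarrow> (real^'n \<Rightarrow> real^'n) \<Rightarrow> real^'n \<Rightarrow> real^'n" where
  "P_transform \<alpha> f x = integral\<^sup>L sphere_sigma (\<lambda>\<zeta>. P_kernel \<alpha> x \<zeta> *\<^sub>R f \<zeta>)"

definition in_Lp :: "real \<Rightarrow> (real^'n \<Rightarrow> real^'n) \<Rightarrow> bool" where
  "in_Lp p f \<longleftrightarrow> f \<in> borel_measurable sphere_sigma
      \<and> integrable sphere_sigma (\<lambda>\<zeta>. norm (f \<zeta>) powr p)"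

definition Lp_norm :: "real \<Rightarrow> (real^'n \<Rightarrow> real^'n) \<Rightarrow> real" where
  "Lp_norm p f = (integral\<^sup>L sphere_sigma (\<lambda>\<zeta>. norm (f \<zeta>) powr p)) powr (1 / p)"

definition e_last :: "real^('n::{finite,wellorder})" where
  "e_last = axis (Max (UNIV :: 'n set)) 1"

definition G_fun :: "real \<Rightarrow> real \<Rightarrow> real \<Rightarrow> ('n::{finite,wellorder}) itself \<Rightarrow> real" where
  "G_fun \<alpha> p r _ = (let q = p / (p - 1) in
     (INF a\<in>{0::real..}. (integral\<^sup>L (sphere_sigma :: (real^('n::{finite,wellorder})) measure)
        (\<lambda>\<eta>. \<bar>P_kernel \<alpha> (r *\<^sub>R (e_last :: real^('n::{finite,wellorder}))) \<eta> - a\<bar> powr q)) powr (1 / q)))"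

end

theory Submission
  imports Defs
begin

(* Write P(eta) = P_alpha(r e_n, eta) and q = p/(p-1).  Since u(0) = C_{n,alpha} * int f = 0, the
   kernel may be replaced by P - a for any constant a, and Hoelder's inequality bounds |u(x)| by
   ||P(|x| e_n, .) - a||_q ||f||_p after a rotation taking x to |x| e_n.  The best constant a = A
   is the unique zero of the strictly decreasing function a -> int sgn(P - a) |P - a|^(q-1), the
   derivative in a of the error int |P - a|^q up to the factor -q; so G_p(r)^q = int |P - A|^q.
   For the same reason f = sgn(P - A) |P - A|^(q-1) e_n has mean zero, and it turns Hoelder's
   inequality into an equality, which gives sharpness.  Finally A depends continuously on r, and
   an envelope argument shows that r -> int |P - A(r)|^q is differentiable with derivative the
   partial r-derivative of the error at a = A(r), which is continuous. *)

section \<open>Signed powers and Hoelder's inequality\<close>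

definition signed_powr :: "real \<Rightarrow> real \<Rightarrow> real" where
  "signed_powr a s = (if s < 0 then - ((- s) powr a) else s powr a)"

lemma abs_signed_powr [simp]: "\<bar>signed_powr a s\<bar> = \<bar>s\<bar> powr a"
  by (simp add: signed_powr_def)

lemma signed_powr_zero [simp]: "signed_powr a 0 = 0"
  by (simp add: signed_powr_def)

lemma signed_powr_pos: "s > 0 \<Longrightarrow> signed_powr a s > 0"
  by (simp add: signed_powr_def)

lemma mult_signed_powr: "s * signed_powr (q - 1) s = \<bar>s\<bar> powr q"
proof -
  have "t * t powr (q - 1) = t powr q" if "t > 0" for t
    using that by (simp add: powr_mult_base)
  from this[of s] this[of "- s"] show ?thesis
    by (cases s "0::real" rule: linorder_cases) (auto simp: signed_powr_def)
qed

lemma signed_powr_strict_mono: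
  assumes "a > 0" "x < y" shows "signed_powr a x < signed_powr a y"
proof -
  have "s powr a < t powr a" if "0 \<le> s" "s < t" for s t
    using powr_less_mono2[of a s t] that assms by simp
  moreover have "- ((- x) powr a) < y powr a" if "x < 0" "y \<ge> 0"
    using that by (smt (verit) powr_gt_zero powr_ge_zero)
  ultimately show ?thesis
    using assms by (cases "x < 0"; cases "y < 0") (auto simp: signed_powr_def)
qed

lemma signed_powr_le_minus_one: "a \<ge> 0 \<Longrightarrow> s \<le> -1 \<Longrightarrow> signed_powr a s \<le> -1"
  using ge_one_powr_ge_zero[of "- s" a] by (simp add: signed_powr_def)

lemma continuous_on_signed_powr:
  assumes "a > 0" shows "continuous_on UNIV (signed_powr a)"
proof -
  have "continuous_on UNIV (\<lambda>s. if id s \<le> 0 then - ((- s) powr a) else s powr a)"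
    by (rule continuous_on_cases_le)
       (use assms in \<open>auto intro!: continuous_intros continuous_on_powr'\<close>)
  also have "(\<lambda>s. if id s \<le> 0 then - ((- s) powr a) else s powr a) = signed_powr a"
    by (auto simp: signed_powr_def fun_eq_iff)
  finally show ?thesis .
qed

lemma continuous_on_abs_powr: "q > 0 \<Longrightarrow> continuous_on UNIV (\<lambda>s::real. \<bar>s\<bar> powr q)"
  by (rule continuous_on_powr') (auto intro: continuous_intros)

lemma has_real_derivative_abs_powr:
  assumes q: "q > 1"
  shows "((\<lambda>s. \<bar>s\<bar> powr q) has_real_derivative q * signed_powr (q - 1) s) (at s)"
proof (cases s "0::real" rule: linorder_cases)
  case greater
  have "((\<lambda>s. s powr q) has_real_derivative q * s powr (q - 1)) (at s)"
    by (rule has_real_derivative_powr[OF greater])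
  then have "((\<lambda>s. \<bar>s\<bar> powr q) has_real_derivative q * s powr (q - 1)) (at s)"
    by (rule has_field_derivative_transform_within_open[where S = "{0<..}"]) (use greater in auto)
  then show ?thesis using greater by (simp add: signed_powr_def)
next
  case less
  have "((\<lambda>s. (- s) powr q) has_real_derivative q * (- s) powr (q - 1) * (- 1)) (at s)"
    by (rule DERIV_chain2[OF has_real_derivative_powr]) (use less in \<open>auto intro!: derivative_eq_intros\<close>)
  then have "((\<lambda>s. \<bar>s\<bar> powr q) has_real_derivative q * (- s) powr (q - 1) * (- 1)) (at s)"
    by (rule has_field_derivative_transform_within_open[where S = "{..<0}"]) (use less in auto)
  then show ?thesis using less by (simp add: signed_powr_def)
next
  case equal
  have "((\<lambda>h. \<bar>h\<bar> powr q / h) \<longlongrightarrow> 0) (at 0)"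
  proof (rule Lim_null_comparison)
    show "\<forall>\<^sub>F h in at 0. norm (\<bar>h\<bar> powr q / h) \<le> \<bar>h\<bar> powr (q - 1)"
      by (intro always_eventually allI) (simp add: powr_diff abs_divide)
    have "((\<lambda>h::real. \<bar>h\<bar> powr (q - 1)) \<longlongrightarrow> \<bar>0\<bar> powr (q - 1)) (at 0)"
      by (intro tendsto_intros) (use q in auto)
    then show "((\<lambda>h::real. \<bar>h\<bar> powr (q - 1)) \<longlongrightarrow> 0) (at 0)" by simp
  qed
  then show ?thesis using equal by (simp add: DERIV_def)
qed

lemma abs_powr_above_tangent:
  assumes q: "q > 1"
  shows "\<bar>x\<bar> powr q + q * signed_powr (q - 1) x * (y - x) \<le> \<bar>y\<bar> powr q"
proof -
  have "signed_powr (q - 1) s \<le> signed_powr (q - 1) t" if "s \<le> t" for s t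
    using signed_powr_strict_mono[of "q - 1" s t] that q by (cases "s = t") auto
  then have "convex_on UNIV (\<lambda>s. \<bar>s\<bar> powr q)"
    by (intro convex_on_realI[OF _ has_real_derivative_abs_powr[OF q]]) (use q in auto)
  from convex_on_imp_above_tangent[OF this _ _ _ has_real_derivative_abs_powr[OF q, of x], of y]
  show ?thesis by (simp add: algebra_simps)
qed

lemma Holder_inequality_nonneg:
  fixes g h :: "'x \<Rightarrow> real"
  assumes p: "p > 1" and q: "q = p / (p - 1)"
    and g: "\<And>x. x \<in> space M \<Longrightarrow> g x \<ge> 0" and h: "\<And>x. x \<in> space M \<Longrightarrow> h x \<ge> 0"
    and ig: "integrable M (\<lambda>x. g x powr q)" and ih: "integrable M (\<lambda>x. h x powr p)"
    and igh: "integrable M (\<lambda>x. g x * h x)"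
  shows "(\<integral>x. g x * h x \<partial>M) \<le> (\<integral>x. g x powr q \<partial>M) powr (1/q) * (\<integral>x. h x powr p \<partial>M) powr (1/p)"
proof -
  have q1: "q > 1" and pq: "1/q + 1/p = 1"
    using p by (auto simp: q field_simps)
  define A where "A = (\<integral>x. g x powr q \<partial>M)"
  define B where "B = (\<integral>x. h x powr p \<partial>M)"
  have "A \<ge> 0" "B \<ge> 0"
    unfolding A_def B_def by (auto intro: integral_nonneg_AE)
  show ?thesis
  proof (cases "A = 0 \<or> B = 0")
    case True
    then have "AE x in M. g x powr q = 0 \<or> h x powr p = 0"
      using integral_nonneg_eq_0_iff_AE[OF ig] integral_nonneg_eq_0_iff_AE[OF ih]
      by (auto simp: A_def B_def)
    then have "AE x in M. g x * h x = 0"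
      by eventually_elim auto
    then show ?thesis by (simp add: integral_eq_zero_AE)
  next
    case False
    with \<open>A \<ge> 0\<close> \<open>B \<ge> 0\<close> have A: "A > 0" and B: "B > 0" by auto
    define a where "a = A powr (1/q)"
    define b where "b = B powr (1/p)"
    have ab: "a > 0" "b > 0" "a powr q = A" "b powr p = B"
      using A B q1 p by (simp_all add: a_def b_def powr_powr)
    have Young: "g x * h x / (a * b) \<le> g x powr q / (q * A) + h x powr p / (p * B)"
      if x: "x \<in> space M" for x
    proof -
      have "(g x / a) * (h x / b) \<le> (g x / a) powr q / q + (h x / b) powr p / p"
        by (rule Youngs_inequality[OF q1 p pq]) (use g[OF x] h[OF x] ab in auto)
      with g[OF x] h[OF x] ab show ?thesis by (simp add: powr_divide field_simps)
    qed
    have "(\<integral>x. g x * h x / (a * b) \<partial>M) \<le> (\<integral>x. g x powr q / (q * A) + h x powr p / (p * B) \<partial>M)"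
      by (rule integral_mono) (use Young ig ih igh in auto)
    also have "\<dots> = 1"
      using ig ih A B pq by (simp add: A_def[symmetric] B_def[symmetric] field_simps)
    finally show ?thesis
      using ab by (simp add: divide_le_eq a_def b_def A_def B_def)
  qed
qed

lemma integrable_if_Lp:
  fixes f :: "'x \<Rightarrow> 'b::{banach,second_countable_topology}"
  assumes "finite_measure M" and p: "p \<ge> 1" and "f \<in> borel_measurable M"
    and ip: "integrable M (\<lambda>x. norm (f x) powr p)"
  shows "integrable M f"
proof (rule Bochner_Integration.integrable_bound[where f = "\<lambda>x. 1 + norm (f x) powr p"])
  show "integrable M (\<lambda>x. 1 + norm (f x) powr p)"
    using assms by (intro Bochner_Integration.integrable_add finite_measure.integrable_const ip)
  have "norm (f x) \<le> 1 + norm (f x) powr p" for x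
  proof (cases "norm (f x) \<le> 1")
    case True
    then show ?thesis using powr_ge_zero[of "norm (f x)" p] by linarith
  next
    case False
    then show ?thesis using powr_mono[OF p, of "norm (f x)"] by simp
  qed
  then show "AE x in M. norm (f x) \<le> norm (1 + norm (f x) powr p)"
    by (auto intro!: AE_I2 simp: abs_of_nonneg add_nonneg_nonneg)
qed fact

lemma integrable_bounded_scaleR:
  fixes f :: "'x \<Rightarrow> 'b::{banach,second_countable_topology}"
  assumes f: "integrable M f" and k: "k \<in> borel_measurable M"
    and B: "\<And>x. x \<in> space M \<Longrightarrow> \<bar>k x\<bar> \<le> B"
  shows "integrable M (\<lambda>x. k x *\<^sub>R f x)"
proof (rule Bochner_Integration.integrable_bound[where f = "\<lambda>x. B * norm (f x)"])
  show "integrable M (\<lambda>x. B * norm (f x))" using f by simp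
  show "(\<lambda>x. k x *\<^sub>R f x) \<in> borel_measurable M" using f k by measurable
  have "\<bar>k x\<bar> * norm (f x) \<le> \<bar>B\<bar> * norm (f x)" if "x \<in> space M" for x
    using B[OF that] by (intro mult_right_mono) auto
  then show "AE x in M. norm (k x *\<^sub>R f x) \<le> norm (B * norm (f x))"
    by (auto intro!: AE_I2 simp: abs_mult)
qed

section \<open>The normalized surface measure\<close>

definition radial_proj :: "'a::euclidean_space \<Rightarrow> 'a" where
  "radial_proj x = (if x = 0 then (SOME z. z \<in> sphere (0::'a) 1) else x /\<^sub>R norm x)"

lemma sphere_sigma_radial_proj:
  "sphere_sigma = distr (uniform_measure lborel (ball 0 1)) (restrict_space borel (sphere 0 1))
     (radial_proj :: 'a::euclidean_space \<Rightarrow> 'a)"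
  unfolding sphere_sigma_def radial_proj_def ..

lemma space_sphere_sigma [simp]: "space (sphere_sigma :: 'a::euclidean_space measure) = sphere 0 1"
  by (simp add: sphere_sigma_def)

lemma sets_sphere_sigma:
  "sets (sphere_sigma :: 'a::euclidean_space measure) = sets (restrict_space borel (sphere 0 1))"
  by (simp add: sphere_sigma_def)

lemma radial_proj_in_sphere: "radial_proj (x::'a::euclidean_space) \<in> sphere 0 1"
proof (cases "x = 0")
  case True
  have "\<exists>z. z \<in> sphere (0::'a) 1"
    by (metis norm_Basis dist_0_norm mem_sphere SOME_Basis)
  with True show ?thesis unfolding radial_proj_def by (metis someI_ex)
qed (simp add: radial_proj_def)

lemma borel_measurable_radial_proj: "radial_proj \<in> borel_measurable (borel :: 'a::euclidean_space measure)"
  unfolding radial_proj_def by measurable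

lemma measurable_radial_proj:
  "radial_proj \<in> measurable (uniform_measure lborel (ball 0 1)) (restrict_space borel (sphere (0::'a::euclidean_space) 1))"
  by (rule measurable_restrict_space2)
     (use borel_measurable_radial_proj radial_proj_in_sphere in \<open>auto simp: measurable_def\<close>)

lemma emeasure_lborel_ball_pos: "r > 0 \<Longrightarrow> emeasure lborel (ball (c::'a::euclidean_space) r) \<noteq> 0"
  using content_ball_pos[of r c] unfolding measure_def by (metis enn2real_0 less_irrefl)

lemma emeasure_sphere_sigma:
  assumes X: "X \<in> sets (restrict_space borel (sphere (0::'a::euclidean_space) 1))"
  shows "emeasure (sphere_sigma :: 'a measure) X
    = emeasure lborel (ball 0 1 \<inter> radial_proj -` X) / emeasure lborel (ball (0::'a) 1)"
proof -
  have "X \<in> sets borel" using X by (auto simp: sets_restrict_space)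
  then have "radial_proj -` X \<in> sets borel"
    using measurable_sets[OF borel_measurable_radial_proj] by simp
  moreover have "emeasure (sphere_sigma :: 'a measure) X
      = emeasure (uniform_measure lborel (ball 0 1)) (radial_proj -` X)"
    unfolding sphere_sigma_radial_proj by (subst emeasure_distr[OF measurable_radial_proj X]) simp
  ultimately show ?thesis by (subst (asm) emeasure_uniform_measure) auto
qed

lemma emeasure_sphere_sigma_sphere: "emeasure (sphere_sigma :: 'a::euclidean_space measure) (sphere 0 1) = 1"
proof -
  have "sphere (0::'a) 1 \<in> sets (restrict_space borel (sphere 0 1))"
    using sets.top[of "restrict_space borel (sphere (0::'a) 1)"] by simp
  moreover have "radial_proj -` sphere (0::'a) 1 = UNIV"
    using radial_proj_in_sphere by auto
  ultimately show ?thesis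
    using emeasure_lborel_ball_pos[of 1 "0::'a"] emeasure_lborel_ball_finite[of "0::'a" 1]
    by (simp add: emeasure_sphere_sigma ennreal_divide_self)
qed

lemma emeasure_space_sphere_sigma_nonzero:
  "emeasure (sphere_sigma :: 'a::euclidean_space measure) (space sphere_sigma) \<noteq> 0"
  by (simp add: emeasure_sphere_sigma_sphere)

lemma measure_sphere_sigma_sphere: "measure (sphere_sigma :: 'a::euclidean_space measure) (sphere 0 1) = 1"
  by (simp add: measure_def emeasure_sphere_sigma_sphere)

lemma finite_measure_sphere_sigma: "finite_measure (sphere_sigma :: 'a::euclidean_space measure)"
  by (rule finite_measureI) (simp add: emeasure_sphere_sigma_sphere)

lemma borel_measurable_sphere_sigma_continuous:
  "continuous_on (sphere 0 1) h \<Longrightarrow> h \<in> borel_measurable (sphere_sigma :: 'a::euclidean_space measure)"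
  using measurable_cong_sets[OF sets_sphere_sigma refl] borel_measurable_continuous_on_restrict by blast

lemma integrable_sphere_sigma_continuous:
  fixes h :: "'a::euclidean_space \<Rightarrow> 'b::{banach,second_countable_topology}"
  assumes h: "continuous_on (sphere 0 1) h"
  shows "integrable sphere_sigma h"
proof -
  obtain B where "\<And>x. x \<in> sphere 0 1 \<Longrightarrow> norm (h x) \<le> B"
    using continuous_on_compact_bound[OF compact_sphere h] by blast
  then show ?thesis
    by (intro finite_measure.integrable_const_bound[OF finite_measure_sphere_sigma, where B = B])
       (auto intro!: borel_measurable_sphere_sigma_continuous h)
qed

lemma continuous_on_sphere_integral:
  fixes H :: "'b::heine_borel \<Rightarrow> 'a::euclidean_space \<Rightarrow> real"
  assumes H: "continuous_on (A \<times> sphere 0 1) (\<lambda>(x, \<eta>). H x \<eta>)"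
  shows "continuous_on A (\<lambda>x. \<integral>\<eta>. H x \<eta> \<partial>sphere_sigma)"
  unfolding continuous_on_sequentially
proof (intro allI ballI impI, elim conjE)
  fix X x0 assume x0: "x0 \<in> A" and X: "\<forall>n. X n \<in> A" and lim: "X \<longlonglongrightarrow> x0"
  define K where "K = insert x0 (range X) \<times> sphere (0::'a) 1"
  have "compact K" "K \<subseteq> A \<times> sphere 0 1"
    using compact_sequence_with_limit[OF lim] x0 X by (auto simp: K_def intro!: compact_Times)
  then obtain B where B: "\<And>z. z \<in> K \<Longrightarrow> norm ((\<lambda>(x, \<eta>). H x \<eta>) z) \<le> B"
    using continuous_on_compact_bound continuous_on_subset[OF H] by metis
  have H_at: "continuous_on (sphere 0 1) (H x)" if "x \<in> A" for x
    using continuous_on_compose2[OF H continuous_on_Pair[OF continuous_on_const continuous_on_id]]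
      that by auto
  show "((\<lambda>x. \<integral>\<eta>. H x \<eta> \<partial>sphere_sigma) \<circ> X) \<longlonglongrightarrow> (\<integral>\<eta>. H x0 \<eta> \<partial>sphere_sigma)"
    unfolding o_def
  proof (rule integral_dominated_convergence[where w = "\<lambda>_. B"])
    show "integrable sphere_sigma (\<lambda>_. B)"
      by (rule finite_measure.integrable_const[OF finite_measure_sphere_sigma])
    show "H x0 \<in> borel_measurable sphere_sigma" "H (X n) \<in> borel_measurable sphere_sigma" for n
      using x0 X by (auto intro!: borel_measurable_sphere_sigma_continuous H_at)
    show "AE \<eta> in sphere_sigma. (\<lambda>n. H (X n) \<eta>) \<longlonglongrightarrow> H x0 \<eta>"
    proof (rule AE_I2)
      fix \<eta> :: 'a assume "\<eta> \<in> space sphere_sigma"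
      then have "(x0, \<eta>) \<in> A \<times> sphere 0 1" "\<forall>n. (X n, \<eta>) \<in> A \<times> sphere 0 1"
        using x0 X by auto
      with lim show "(\<lambda>n. H (X n) \<eta>) \<longlonglongrightarrow> H x0 \<eta>"
        using H[unfolded continuous_on_sequentially, rule_format, of "(x0, \<eta>)" "\<lambda>n. (X n, \<eta>)"]
          tendsto_Pair[OF lim tendsto_const] by (auto simp: o_def)
    qed
    show "AE \<eta> in sphere_sigma. norm (H (X n) \<eta>) \<le> B" for n
      using B by (auto intro!: AE_I2 simp: K_def)
  qed
qed

lemma has_real_derivative_sphere_integral:
  fixes H H' :: "real \<Rightarrow> 'a::euclidean_space \<Rightarrow> real"
  assumes I: "open I" "s0 \<in> I"
    and H': "continuous_on (I \<times> sphere 0 1) (\<lambda>(s, \<eta>). H' s \<eta>)"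
    and H: "\<And>s. s \<in> I \<Longrightarrow> continuous_on (sphere 0 1) (H s)"
    and deriv: "\<And>s \<eta>. s \<in> I \<Longrightarrow> \<eta> \<in> sphere 0 1 \<Longrightarrow> ((\<lambda>s. H s \<eta>) has_real_derivative H' s \<eta>) (at s)"
  shows "((\<lambda>s. \<integral>\<eta>. H s \<eta> \<partial>sphere_sigma) has_real_derivative (\<integral>\<eta>. H' s0 \<eta> \<partial>sphere_sigma)) (at s0)"
proof -
  obtain \<delta> where \<delta>: "\<delta> > 0" "cball s0 \<delta> \<subseteq> I"
    using open_contains_cball I by blast
  obtain B where B: "B \<ge> 0" "\<And>z. z \<in> cball s0 \<delta> \<times> sphere 0 1 \<Longrightarrow> norm ((\<lambda>(s, \<eta>). H' s \<eta>) z) \<le> B"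
    using continuous_on_compact_bound[OF compact_Times[OF compact_cball compact_sphere]]
      continuous_on_subset[OF H'] \<delta> by (metis Sigma_mono order_refl)
  have quotient_bound: "\<bar>(H (s0 + h) \<eta> - H s0 \<eta>) / h\<bar> \<le> B"
    if "\<bar>h\<bar> < \<delta>" "\<eta> \<in> sphere 0 1" for h \<eta>
  proof -
    have "norm (H (s0 + h) \<eta> - H s0 \<eta>) \<le> B * norm (s0 + h - s0)"
    proof (rule field_differentiable_bound[OF convex_cball])
      show "((\<lambda>s. H s \<eta>) has_field_derivative H' s \<eta>) (at s within cball s0 \<delta>)"
        if "s \<in> cball s0 \<delta>" for s
        using deriv[of s \<eta>] \<delta>(2) that \<open>\<eta> \<in> sphere 0 1\<close>
        by (metis has_field_derivative_at_within subsetD)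
      show "norm (H' s \<eta>) \<le> B" if "s \<in> cball s0 \<delta>" for s
        using B(2)[of "(s, \<eta>)"] that \<open>\<eta> \<in> sphere 0 1\<close> by auto
    qed (use that \<delta> in \<open>auto simp: dist_real_def\<close>)
    then show ?thesis using B(1) by (cases "h = 0") (auto simp: abs_divide divide_le_eq mult.commute)
  qed
  have H'_at: "continuous_on (sphere 0 1) (H' s0)"
    using continuous_on_compose2[OF H' continuous_on_Pair[OF continuous_on_const continuous_on_id]]
      I by auto
  have "((\<lambda>h. ((\<integral>\<eta>. H (s0 + h) \<eta> \<partial>sphere_sigma) - (\<integral>\<eta>. H s0 \<eta> \<partial>sphere_sigma)) / h)
      \<longlongrightarrow> (\<integral>\<eta>. H' s0 \<eta> \<partial>sphere_sigma)) (at 0 within ball 0 \<delta>)"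
    unfolding tendsto_at_iff_sequentially o_def
  proof (intro allI impI)
    fix X :: "nat \<Rightarrow> real" assume X: "\<forall>i. X i \<in> ball 0 \<delta> - {0}" and lim: "X \<longlonglongrightarrow> 0"
    then have X\<delta>: "\<bar>X n\<bar> < \<delta>" and X0: "X n \<noteq> 0" for n
      by (auto simp: dist_real_def)
    have XI: "s0 + X n \<in> I" for n
    proof -
      have "s0 + X n \<in> cball s0 \<delta>" using X\<delta>[of n] by (simp add: dist_real_def)
      then show ?thesis using \<delta>(2) by blast
    qed
    have "(\<lambda>n. \<integral>\<eta>. (H (s0 + X n) \<eta> - H s0 \<eta>) / X n \<partial>sphere_sigma) \<longlonglongrightarrow> (\<integral>\<eta>. H' s0 \<eta> \<partial>sphere_sigma)"
    proof (rule integral_dominated_convergence[where w = "\<lambda>_. B"])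
      show "integrable sphere_sigma (\<lambda>_. B)"
        by (rule finite_measure.integrable_const[OF finite_measure_sphere_sigma])
      show "H' s0 \<in> borel_measurable sphere_sigma"
        by (rule borel_measurable_sphere_sigma_continuous[OF H'_at])
      show "(\<lambda>\<eta>. (H (s0 + X n) \<eta> - H s0 \<eta>) / X n) \<in> borel_measurable sphere_sigma" for n
        by (intro borel_measurable_sphere_sigma_continuous continuous_intros H XI I) (simp add: X0)
      show "AE \<eta> in sphere_sigma. (\<lambda>n. (H (s0 + X n) \<eta> - H s0 \<eta>) / X n) \<longlonglongrightarrow> H' s0 \<eta>"
      proof (rule AE_I2)
        fix \<eta> :: 'a assume "\<eta> \<in> space sphere_sigma"
        then have "((\<lambda>h. (H (s0 + h) \<eta> - H s0 \<eta>) / h) \<longlongrightarrow> H' s0 \<eta>) (at 0)"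
          using deriv[OF I(2)] unfolding DERIV_def by simp
        then show "(\<lambda>n. (H (s0 + X n) \<eta> - H s0 \<eta>) / X n) \<longlonglongrightarrow> H' s0 \<eta>"
          unfolding tendsto_at_iff_sequentially using X lim by (auto simp: o_def)
      qed
      show "AE \<eta> in sphere_sigma. norm ((H (s0 + X n) \<eta> - H s0 \<eta>) / X n) \<le> B" for n
        using quotient_bound[OF X\<delta>] by (auto intro!: AE_I2)
    qed
    then show "(\<lambda>n. ((\<integral>\<eta>. H (s0 + X n) \<eta> \<partial>sphere_sigma) - (\<integral>\<eta>. H s0 \<eta> \<partial>sphere_sigma)) / X n)
        \<longlonglongrightarrow> (\<integral>\<eta>. H' s0 \<eta> \<partial>sphere_sigma)"
      by (simp add: integrable_sphere_sigma_continuous H XI I)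
  qed
  moreover have "at (0::real) within ball 0 \<delta> = at 0"
    by (rule at_within_open) (use \<delta> in auto)
  ultimately show ?thesis
    unfolding DERIV_def by simp
qed

lemma emeasure_sphere_cap_pos:
  fixes \<eta>0 :: "'a::euclidean_space"
  assumes \<eta>0: "norm \<eta>0 = 1" and \<epsilon>: "\<epsilon> > 0"
  shows "emeasure (sphere_sigma :: 'a measure) (sphere 0 1 \<inter> ball \<eta>0 \<epsilon>) \<noteq> 0"
proof -
  let ?C = "sphere (0::'a) 1 \<inter> ball \<eta>0 \<epsilon>"
  \<comment> \<open>the cone over the cap, without its vertex, is an open set containing \<open>\<eta>0/2\<close>\<close>
  define U where "U = (ball 0 1 - {0}) \<inter> (\<lambda>x::'a. x /\<^sub>R norm x) -` ball \<eta>0 \<epsilon>"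
  have "open U"
    unfolding U_def by (intro continuous_open_preimage continuous_intros) auto
  moreover have "(1/2) *\<^sub>R \<eta>0 \<in> U"
    using \<eta>0 \<epsilon> norm_zero by (simp add: U_def) fastforce
  ultimately obtain d where d: "d > 0" "ball ((1/2) *\<^sub>R \<eta>0) d \<subseteq> U"
    by (meson openE)
  moreover have "U \<subseteq> ball 0 1 \<inter> radial_proj -` ?C"
    by (auto simp: U_def radial_proj_def)
  moreover have "radial_proj -` ?C \<in> sets borel"
    using measurable_sets[OF borel_measurable_radial_proj, of ?C] by simp
  ultimately have "emeasure lborel (ball ((1/2) *\<^sub>R \<eta>0) d) \<le> emeasure lborel (ball 0 1 \<inter> radial_proj -` ?C)"
    by (intro emeasure_mono) auto
  then have "emeasure lborel (ball 0 1 \<inter> radial_proj -` ?C) \<noteq> 0"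
    using emeasure_lborel_ball_pos[OF d(1)] by (metis le_zero_eq)
  moreover have "?C \<in> sets (restrict_space borel (sphere 0 1))"
    by (auto simp: sets_restrict_space)
  ultimately show ?thesis
    using emeasure_lborel_ball_finite[of "0::'a" 1]
    by (simp add: emeasure_sphere_sigma ennreal_divide_eq_0_iff)
qed

lemma integral_sphere_sigma_pos:
  fixes h :: "'a::euclidean_space \<Rightarrow> real"
  assumes h: "continuous_on (sphere 0 1) h" and nonneg: "\<And>\<eta>. \<eta> \<in> sphere 0 1 \<Longrightarrow> h \<eta> \<ge> 0"
    and \<eta>0: "\<eta>0 \<in> sphere 0 1" and pos: "h \<eta>0 > 0"
  shows "(\<integral>\<eta>. h \<eta> \<partial>sphere_sigma) > 0"
proof -
  obtain \<epsilon> where \<epsilon>: "\<epsilon> > 0" "\<And>\<eta>. \<eta> \<in> sphere 0 1 \<Longrightarrow> dist \<eta> \<eta>0 < \<epsilon> \<Longrightarrow> dist (h \<eta>) (h \<eta>0) < h \<eta>0"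
    using h[unfolded continuous_on_iff] \<eta>0 pos by metis
  let ?C = "sphere (0::'a) 1 \<inter> ball \<eta>0 \<epsilon>"
  have "(\<integral>\<eta>. 0 \<partial>(sphere_sigma :: 'a measure)) < (\<integral>\<eta>. h \<eta> \<partial>sphere_sigma)"
  proof (rule finite_measure.integral_less_AE[OF finite_measure_sphere_sigma, where A = ?C])
    show "integrable sphere_sigma h"
      by (rule integrable_sphere_sigma_continuous[OF h])
    show "emeasure sphere_sigma ?C \<noteq> 0"
      using emeasure_sphere_cap_pos \<eta>0 \<epsilon>(1) by simp
    show "?C \<in> sets sphere_sigma"
      by (auto simp: sets_sphere_sigma sets_restrict_space)
    show "AE \<eta> in sphere_sigma. \<eta> \<in> ?C \<longrightarrow> 0 \<noteq> h \<eta>"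
      using \<epsilon>(2) by (intro AE_I2) (force simp: dist_commute)
    show "AE \<eta> in sphere_sigma. 0 \<le> h \<eta>"
      using nonneg by (auto intro!: AE_I2)
  qed simp
  then show ?thesis by simp
qed

lemma borel_measurable_orthogonal_transformation:
  "orthogonal_transformation (T :: 'a::euclidean_space \<Rightarrow> 'a) \<Longrightarrow> T \<in> borel_measurable borel"
  by (intro borel_measurable_continuous_onI linear_continuous_on)
     (simp add: linear_conv_bounded_linear[symmetric] orthogonal_transformation_linear)

lemma emeasure_lborel_orthogonal_vimage:
  fixes T :: "real^('n::{finite,wellorder}) \<Rightarrow> real^('n::{finite,wellorder})"
  assumes T: "orthogonal_transformation T" and E: "E \<in> sets borel" "bounded E"
  shows "emeasure lborel (T -` E) = emeasure lborel E"
proof -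
  have "T -` E = inv T ` E"
    using bij_vimage_eq_inv_image[OF orthogonal_transformation_bij[OF T]] .
  moreover have "E \<in> lmeasurable"
    using E by (intro bounded_set_imp_lmeasurable) (auto simp: sets_completionI_sets)
  ultimately have "T -` E \<in> lmeasurable" "measure lebesgue (T -` E) = measure lebesgue E"
    using measurable_orthogonal_image measure_orthogonal_image orthogonal_transformation_inv[OF T]
    by metis+
  moreover have "T -` E \<in> sets borel"
    using measurable_sets[OF borel_measurable_orthogonal_transformation[OF T] E(1)] by simp
  moreover have "emeasure lborel A = measure lebesgue A" if "A \<in> sets borel" "A \<in> lmeasurable" for A
    using emeasure_eq_measure2[OF that(2)] that(1) by simp
  ultimately show ?thesis
    using E(1) \<open>E \<in> lmeasurable\<close> by metis
qed

lemma measurable_sphere_sigma_orthogonal: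
  assumes T: "orthogonal_transformation (T :: 'a::euclidean_space \<Rightarrow> 'a)"
  shows "T \<in> measurable sphere_sigma sphere_sigma"
proof -
  have "T \<in> measurable (restrict_space borel (sphere (0::'a) 1)) (restrict_space borel (sphere 0 1))"
    by (rule measurable_restrict_space2)
       (auto intro!: measurable_restrict_space1 borel_measurable_orthogonal_transformation[OF T]
         simp: orthogonal_transformation_norm[OF T])
  then show ?thesis
    using measurable_cong_sets[OF sets_sphere_sigma sets_sphere_sigma] by blast
qed

lemma radial_proj_orthogonal:
  assumes T: "orthogonal_transformation T" and x: "x \<noteq> 0"
  shows "radial_proj (T x) = T (radial_proj x)"
proof -
  have "T x \<noteq> 0"
    using x orthogonal_transformation_norm[OF T, of x] by auto
  with x show ?thesis
    by (simp add: radial_proj_def orthogonal_transformation_norm[OF T] orthogonal_transformation_scaleR[OF T])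
qed

lemma distr_sphere_sigma_orthogonal:
  fixes T :: "real^('n::{finite,wellorder}) \<Rightarrow> real^('n::{finite,wellorder})"
  assumes T: "orthogonal_transformation T"
  shows "distr sphere_sigma sphere_sigma T = sphere_sigma"
proof (rule measure_eqI)
  fix A assume "A \<in> sets (distr sphere_sigma sphere_sigma T)"
  then have A: "A \<in> sets (restrict_space borel (sphere (0::(real, 'n) vec) 1))"
    by (simp add: sets_sphere_sigma)
  have TA: "T -` A \<inter> sphere 0 1 \<in> sets (restrict_space borel (sphere (0::(real, 'n) vec) 1))"
    using measurable_sets[OF measurable_sphere_sigma_orthogonal[OF T], of A] A
    by (simp add: sets_sphere_sigma)
  define E where "E = ball 0 1 \<inter> radial_proj -` A"
  define E' where "E' = ball 0 1 \<inter> radial_proj -` (T -` A \<inter> sphere 0 1)"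
  have "A \<in> sets borel" "T -` A \<inter> sphere 0 1 \<in> sets borel"
    using A TA by (auto simp: sets_restrict_space)
  from this[THEN measurable_sets[OF borel_measurable_radial_proj]]
  have E: "E \<in> sets borel" and E': "E' \<in> sets borel"
    unfolding E_def E'_def by auto
  \<comment> \<open>\<open>radial_proj\<close> commutes with \<open>T\<close> except at the null set \<open>{0}\<close>\<close>
  have "E' - {0} = T -` E - {0}"
  proof (intro set_eqI iffI)
    fix x assume "x \<in> E' - {0}"
    then show "x \<in> T -` E - {0}"
      using radial_proj_orthogonal[OF T, of x] orthogonal_transformation_norm[OF T, of x]
      by (auto simp: E_def E'_def)
  next
    fix x assume "x \<in> T -` E - {0}"
    then show "x \<in> E' - {0}"
      using radial_proj_orthogonal[OF T, of x] orthogonal_transformation_norm[OF T, of x]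
        radial_proj_in_sphere[of x]
      by (auto simp: E_def E'_def)
  qed
  moreover have "T -` E \<in> sets borel"
    using measurable_sets[OF borel_measurable_orthogonal_transformation[OF T] E] by simp
  moreover have "{0} \<in> null_sets (lborel :: ((real, 'n) vec) measure)"
    by (simp add: null_sets_def)
  ultimately have "emeasure lborel E' = emeasure lborel (T -` E)"
    using emeasure_Diff_null_set[of "{0}" lborel E'] emeasure_Diff_null_set[of "{0}" lborel "T -` E"] E'
    by (metis sets_lborel)
  also have "\<dots> = emeasure lborel E"
    using E bounded_subset[OF bounded_ball, of E 0 1]
    by (intro emeasure_lborel_orthogonal_vimage[OF T]) (auto simp: E_def)
  finally have "emeasure lborel E' = emeasure lborel E" .
  moreover have "emeasure (distr sphere_sigma sphere_sigma T) A = emeasure sphere_sigma (T -` A \<inter> sphere 0 1)"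
    using emeasure_distr[OF measurable_sphere_sigma_orthogonal[OF T], of A] A
    by (simp add: sets_sphere_sigma)
  ultimately show "emeasure (distr sphere_sigma sphere_sigma T) A = emeasure sphere_sigma A"
    using emeasure_sphere_sigma[OF A] emeasure_sphere_sigma[OF TA] by (simp add: E_def E'_def)
qed simp

lemma integral_sphere_sigma_orthogonal:
  fixes T :: "real^('n::{finite,wellorder}) \<Rightarrow> real^('n::{finite,wellorder})" and h :: "(real, 'n) vec \<Rightarrow> real"
  assumes T: "orthogonal_transformation T" and h: "h \<in> borel_measurable sphere_sigma"
  shows "(\<integral>\<eta>. h (T \<eta>) \<partial>sphere_sigma) = (\<integral>\<eta>. h \<eta> \<partial>sphere_sigma)"
  using integral_distr[OF measurable_sphere_sigma_orthogonal[OF T] h] distr_sphere_sigma_orthogonal[OF T]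
  by simp

section \<open>The kernel along a ray\<close>

definition zonal_kernel :: "real \<Rightarrow> nat \<Rightarrow> real \<Rightarrow> real \<Rightarrow> real" where
  "zonal_kernel \<alpha> n r t = C_const n \<alpha> * (1 - r\<^sup>2) powr (1 + 2 * \<alpha>)
     / (1 - 2 * r * t + r\<^sup>2) powr ((real n + 2 * \<alpha>) / 2)"

definition zonal_kernel_dr :: "real \<Rightarrow> nat \<Rightarrow> real \<Rightarrow> real \<Rightarrow> real" where
  "zonal_kernel_dr \<alpha> n r t = zonal_kernel \<alpha> n r t *
     (- 2 * (1 + 2 * \<alpha>) * r / (1 - r\<^sup>2) - (real n + 2 * \<alpha>) * (r - t) / (1 - 2 * r * t + r\<^sup>2))"

lemma zonal_denominator_pos:
  fixes r t :: real
  assumes "\<bar>r\<bar> < 1" "\<bar>t\<bar> \<le> 1"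
  shows "1 - 2 * r * t + r\<^sup>2 > 0"
proof -
  have "r * t \<le> \<bar>r\<bar>"
    using assms abs_mult[of r t] mult_left_le[of "\<bar>t\<bar>" "\<bar>r\<bar>"] by (smt (verit) abs_ge_self)
  moreover have "0 < (1 - \<bar>r\<bar>)\<^sup>2"
    using assms by simp
  moreover have "(1 - \<bar>r\<bar>)\<^sup>2 = 1 - 2 * \<bar>r\<bar> + r\<^sup>2"
    by (simp add: power2_diff)
  ultimately show ?thesis by linarith
qed

lemma C_const_pos: "n \<ge> 1 \<Longrightarrow> \<alpha> > -1/2 \<Longrightarrow> C_const n \<alpha> > 0"
  unfolding C_const_def by (intro divide_pos_pos mult_pos_pos Gamma_real_pos) auto

lemma zonal_kernel_pos:
  assumes "C_const n \<alpha> > 0" "\<bar>r\<bar> < 1" "\<bar>t\<bar> \<le> 1"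
  shows "zonal_kernel \<alpha> n r t > 0"
proof -
  have "r\<^sup>2 < 1" using assms by (simp add: abs_square_less_1)
  with assms zonal_denominator_pos[OF assms(2,3)] show ?thesis
    by (simp add: zonal_kernel_def)
qed

lemma zonal_kernel_at_origin [simp]: "zonal_kernel \<alpha> n 0 t = C_const n \<alpha>"
  by (simp add: zonal_kernel_def)

lemma has_real_derivative_zonal_kernel:
  assumes "\<bar>r\<bar> < 1" "\<bar>t\<bar> \<le> 1"
  shows "((\<lambda>r. zonal_kernel \<alpha> n r t) has_real_derivative zonal_kernel_dr \<alpha> n r t) (at r)"
proof -
  define C a b where "C = C_const n \<alpha>" and "a = 1 + 2 * \<alpha>" and "b = (real n + 2 * \<alpha>) / 2"
  define X D where "X = 1 - r\<^sup>2" and "D = 1 - 2 * r * t + r\<^sup>2"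
  have X: "X > 0" and D: "D > 0"
    using assms zonal_denominator_pos[OF assms] by (auto simp: X_def D_def abs_square_less_1)
  have deriv: "((\<lambda>r. zonal_kernel \<alpha> n r t) has_real_derivative
      (C * (a * X powr (a - 1) * (- 2 * r)) * D powr b
        - C * X powr a * (b * D powr (b - 1) * (2 * r - 2 * t))) / (D powr b * D powr b)) (at r)"
    (is "(_ has_real_derivative ?d) _")
    unfolding zonal_kernel_def C_def[symmetric] a_def[symmetric] b_def[symmetric]
    using X D unfolding X_def D_def
    by (auto intro!: derivative_eq_intros)
  have "real n + 2 * \<alpha> = 2 * b"
    by (simp add: b_def)
  then have "zonal_kernel_dr \<alpha> n r t = C * X powr a / D powr b * (- 2 * a * r / X - 2 * b * (r - t) / D)"
    unfolding zonal_kernel_dr_def zonal_kernel_def by (simp add: C_def a_def X_def D_def)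
  also have "\<dots> = ?d"
    using X D by (simp add: powr_diff field_simps)
  finally show ?thesis
    using deriv by simp
qed

lemma
  shows continuous_on_zonal_kernel:
      "continuous_on ({-1<..<1} \<times> {-1..1}) (\<lambda>(r, t). zonal_kernel \<alpha> n r t)"
    and continuous_on_zonal_kernel_dr:
      "continuous_on ({-1<..<1} \<times> {-1..1}) (\<lambda>(r, t). zonal_kernel_dr \<alpha> n r t)"
proof -
  have nz: "1 - (fst z)\<^sup>2 \<noteq> 0" "1 - 2 * fst z * snd z + (fst z)\<^sup>2 \<noteq> 0"
    if "z \<in> {-1<..<1::real} \<times> {-1..1::real}" for z
    using that zonal_denominator_pos[of "fst z" "snd z"] abs_square_less_1[of "fst z"]
    by (auto simp: abs_le_iff)
  show K: "continuous_on ({-1<..<1} \<times> {-1..1}) (\<lambda>(r, t). zonal_kernel \<alpha> n r t)"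
    unfolding zonal_kernel_def case_prod_unfold
    by (intro continuous_intros continuous_on_powr) (use nz in auto)
  show "continuous_on ({-1<..<1} \<times> {-1..1}) (\<lambda>(r, t). zonal_kernel_dr \<alpha> n r t)"
    unfolding zonal_kernel_dr_def case_prod_unfold
    by (intro continuous_intros K[unfolded case_prod_unfold]) (use nz in auto)
qed

lemma zonal_kernel_poles_differ:
  assumes "C_const n \<alpha> > 0" "0 < \<bar>r\<bar>" "\<bar>r\<bar> < 1" "real n + 2 * \<alpha> > 0"
  shows "zonal_kernel \<alpha> n r 1 \<noteq> zonal_kernel \<alpha> n r (-1)"
proof -
  define g where "g = (real n + 2 * \<alpha>) / 2"
  define D1 D2 where "D1 = 1 - 2 * r * 1 + r\<^sup>2" and "D2 = 1 - 2 * r * (-1) + r\<^sup>2"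
  have D: "D1 > 0" "D2 > 0" "D1 \<noteq> D2"
    using assms zonal_denominator_pos[of r 1] zonal_denominator_pos[of r "-1"]
    by (auto simp: D1_def D2_def)
  have "D1 powr g \<noteq> D2 powr g"
  proof
    assume "D1 powr g = D2 powr g"
    then have "(D1 powr g) powr (1/g) = (D2 powr g) powr (1/g)" by simp
    moreover have "g \<noteq> 0" using assms(4) by (simp add: g_def)
    ultimately show False using D by (simp add: powr_powr)
  qed
  moreover have "r\<^sup>2 < 1"
    using assms by (simp add: abs_square_less_1)
  ultimately show ?thesis
    unfolding zonal_kernel_def D1_def[symmetric] D2_def[symmetric] g_def[symmetric]
    using assms(1) D by (simp add: divide_simps)
qed

lemma P_kernel_zonal:
  fixes e \<eta> :: "(real, 'n::{finite,wellorder}) vec"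
  assumes e: "norm e = 1" and \<eta>: "norm \<eta> = 1"
  shows "P_kernel \<alpha> (r *\<^sub>R e) \<eta> = zonal_kernel \<alpha> CARD('n) r (\<eta> \<bullet> e)"
proof -
  have "(norm (r *\<^sub>R e - \<eta>))\<^sup>2 = (r *\<^sub>R e - \<eta>) \<bullet> (r *\<^sub>R e - \<eta>)"
    by (rule power2_norm_eq_inner)
  also have "\<dots> = r\<^sup>2 * (e \<bullet> e) - 2 * r * (\<eta> \<bullet> e) + \<eta> \<bullet> \<eta>"
    by (simp add: inner_diff_left inner_diff_right inner_commute[of e \<eta>] power2_eq_square algebra_simps)
  also have "\<dots> = 1 - 2 * r * (\<eta> \<bullet> e) + r\<^sup>2"
    using e \<eta> by (simp add: norm_eq_1)
  finally have sq: "(norm (r *\<^sub>R e - \<eta>))\<^sup>2 = 1 - 2 * r * (\<eta> \<bullet> e) + r\<^sup>2" .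
  have "norm (r *\<^sub>R e - \<eta>) powr \<gamma> = ((norm (r *\<^sub>R e - \<eta>))\<^sup>2) powr (\<gamma> / 2)" for \<gamma>
    by (simp add: powr_powr flip: powr_numeral)
  then have "norm (r *\<^sub>R e - \<eta>) powr (real CARD('n) + 2 * \<alpha>)
      = (1 - 2 * r * (\<eta> \<bullet> e) + r\<^sup>2) powr ((real CARD('n) + 2 * \<alpha>) / 2)"
    unfolding sq .
  then show ?thesis
    using e by (simp add: P_kernel_def zonal_kernel_def power_mult_distrib)
qed

lemma P_kernel_at_origin:
  "norm \<zeta> = 1 \<Longrightarrow> P_kernel \<alpha> 0 \<zeta> = C_const CARD('n) \<alpha>" for \<zeta> :: "(real, 'n::finite) vec"
  by (simp add: P_kernel_def)

lemma continuous_on_P_kernel: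
  fixes x :: "(real, 'n::finite) vec"
  assumes "norm x < 1"
  shows "continuous_on (sphere 0 1) (P_kernel \<alpha> x)"
  unfolding P_kernel_def[abs_def] using assms
  by (intro continuous_intros continuous_on_powr) auto

lemma P_kernel_orthogonal:
  fixes T :: "(real, 'n::finite) vec \<Rightarrow> (real, 'n) vec"
  assumes T: "orthogonal_transformation T"
  shows "P_kernel \<alpha> (T x) (T \<zeta>) = P_kernel \<alpha> x \<zeta>"
proof -
  have "T x - T \<zeta> = T (x - \<zeta>)"
    using orthogonal_transformation_linear[OF T] by (simp add: linear_diff)
  then show ?thesis
    by (simp add: P_kernel_def orthogonal_transformation_norm[OF T])
qed

lemma
  fixes e :: "'a::euclidean_space"
  assumes e: "norm e = 1"
  shows continuous_on_zonal_kernel_sphere: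
      "continuous_on ({-1<..<1} \<times> sphere 0 1) (\<lambda>(r, \<eta>). zonal_kernel \<alpha> n r (\<eta> \<bullet> e))"
    and continuous_on_zonal_kernel_dr_sphere:
      "continuous_on ({-1<..<1} \<times> sphere 0 1) (\<lambda>(r, \<eta>). zonal_kernel_dr \<alpha> n r (\<eta> \<bullet> e))"
proof -
  have "\<bar>\<eta> \<bullet> e\<bar> \<le> 1" if "\<eta> \<in> sphere 0 1" for \<eta>
    using Cauchy_Schwarz_ineq2[of \<eta> e] e that by simp
  then have maps: "(\<lambda>(r, \<eta>). (r, \<eta> \<bullet> e)) ` ({-1<..<1} \<times> sphere (0::'a) 1) \<subseteq> {-1<..<1} \<times> {-1..1}"
    by (force simp: abs_le_iff)
  have cont: "continuous_on ({-1<..<1} \<times> sphere (0::'a) 1) (\<lambda>(r, \<eta>). (r, \<eta> \<bullet> e))"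
    by (simp add: case_prod_unfold) (intro continuous_intros)
  show "continuous_on ({-1<..<1} \<times> sphere 0 1) (\<lambda>(r, \<eta>). zonal_kernel \<alpha> n r (\<eta> \<bullet> e))"
    using continuous_on_compose2[OF continuous_on_zonal_kernel cont maps] by (simp add: case_prod_unfold)
  show "continuous_on ({-1<..<1} \<times> sphere 0 1) (\<lambda>(r, \<eta>). zonal_kernel_dr \<alpha> n r (\<eta> \<bullet> e))"
    using continuous_on_compose2[OF continuous_on_zonal_kernel_dr cont maps] by (simp add: case_prod_unfold)
qed

lemma integral_P_kernel_zonal:
  fixes x e :: "(real, 'n::{finite,wellorder}) vec" and h :: "real \<Rightarrow> real"
  assumes e: "norm e = 1" and x: "norm x < 1" and h: "continuous_on UNIV h"
  shows "(\<integral>\<zeta>. h (P_kernel \<alpha> x \<zeta>) \<partial>sphere_sigma)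
    = (\<integral>\<eta>. h (zonal_kernel \<alpha> CARD('n) (norm x) (\<eta> \<bullet> e)) \<partial>sphere_sigma)"
proof -
  obtain T where T: "orthogonal_transformation T" "T x = norm x *\<^sub>R e"
    using orthogonal_transformation_exists[of x "norm x *\<^sub>R e"] e by auto
  have "(\<lambda>\<eta>. (norm x, \<eta>)) ` sphere 0 1 \<subseteq> {-1<..<1} \<times> sphere 0 1"
    using x norm_ge_zero[of x] by (auto simp del: norm_ge_zero)
  from continuous_on_compose2[OF continuous_on_zonal_kernel_sphere(1)[OF e]
      continuous_on_Pair[OF continuous_on_const continuous_on_id] this]
  have "continuous_on (sphere 0 1) (\<lambda>\<eta>. zonal_kernel \<alpha> CARD('n) (norm x) (\<eta> \<bullet> e))"
    by simp
  then have meas: "(\<lambda>\<eta>. h (zonal_kernel \<alpha> CARD('n) (norm x) (\<eta> \<bullet> e))) \<in> borel_measurable sphere_sigma"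
    by (intro borel_measurable_sphere_sigma_continuous continuous_on_compose2[OF h]) auto
  have "(\<integral>\<zeta>. h (P_kernel \<alpha> x \<zeta>) \<partial>sphere_sigma)
      = (\<integral>\<zeta>. h (zonal_kernel \<alpha> CARD('n) (norm x) (T \<zeta> \<bullet> e)) \<partial>sphere_sigma)"
  proof (rule Bochner_Integration.integral_cong[OF refl])
    fix \<zeta> :: "(real, 'n) vec" assume "\<zeta> \<in> space sphere_sigma"
    then have "norm (T \<zeta>) = 1"
      by (simp add: orthogonal_transformation_norm[OF T(1)])
    then show "h (P_kernel \<alpha> x \<zeta>) = h (zonal_kernel \<alpha> CARD('n) (norm x) (T \<zeta> \<bullet> e))"
      using P_kernel_orthogonal[OF T(1), of \<alpha> x \<zeta>] P_kernel_zonal[OF e, of "T \<zeta>" \<alpha> "norm x"] T(2)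
      by simp
  qed
  also have "\<dots> = (\<integral>\<eta>. h (zonal_kernel \<alpha> CARD('n) (norm x) (\<eta> \<bullet> e)) \<partial>sphere_sigma)"
    by (rule integral_sphere_sigma_orthogonal[OF T(1) meas])
  finally show ?thesis .
qed

section \<open>Best approximation of the kernel by constants in \<open>L^q\<close>\<close>

locale zonal_fit =
  fixes \<alpha> q :: real and n :: nat and e :: "'a::euclidean_space"
  assumes q_gt_1: "q > 1" and alpha_gt: "\<alpha> > -1/2" and n_ge_1: "n \<ge> 1" and norm_e: "norm e = 1"
begin

definition fit_error :: "real \<Rightarrow> real \<Rightarrow> real" where
  "fit_error r a = (\<integral>\<eta>. \<bar>zonal_kernel \<alpha> n r (\<eta> \<bullet> e) - a\<bar> powr q \<partial>(sphere_sigma :: 'a measure))"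

definition fit_error_dr :: "real \<Rightarrow> real \<Rightarrow> real" where
  "fit_error_dr r a = (\<integral>\<eta>. q * signed_powr (q - 1) (zonal_kernel \<alpha> n r (\<eta> \<bullet> e) - a)
     * zonal_kernel_dr \<alpha> n r (\<eta> \<bullet> e) \<partial>(sphere_sigma :: 'a measure))"

definition fit_balance :: "real \<Rightarrow> real \<Rightarrow> real" where
  "fit_balance r a = (\<integral>\<eta>. signed_powr (q - 1) (zonal_kernel \<alpha> n r (\<eta> \<bullet> e) - a) \<partial>(sphere_sigma :: 'a measure))"

definition best_const :: "real \<Rightarrow> real" where
  "best_const r = (THE a. fit_balance r a = 0)"

definition min_fit_error :: "real \<Rightarrow> real" where
  "min_fit_error r = fit_error r (best_const r)"

lemma C_const_n_pos: "C_const n \<alpha> > 0"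
  using C_const_pos n_ge_1 alpha_gt by blast

lemma zonal_kernel_sphere_pos:
  "r \<in> {-1<..<1} \<Longrightarrow> \<eta> \<in> sphere (0::'a) 1 \<Longrightarrow> zonal_kernel \<alpha> n r (\<eta> \<bullet> e) > 0"
  using zonal_kernel_pos[OF C_const_n_pos, of r "\<eta> \<bullet> e"] Cauchy_Schwarz_ineq2[of \<eta> e] norm_e by auto

lemma
  shows continuous_on_shifted_zonal:
      "continuous_on (({-1<..<1} \<times> UNIV) \<times> sphere (0::'a) 1)
         (\<lambda>((r, a), \<eta>). zonal_kernel \<alpha> n r (\<eta> \<bullet> e) - a)"
    and continuous_on_fit_balance_integrand:
      "continuous_on (({-1<..<1} \<times> UNIV) \<times> sphere (0::'a) 1)
         (\<lambda>((r, a), \<eta>). signed_powr (q - 1) (zonal_kernel \<alpha> n r (\<eta> \<bullet> e) - a))"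
    and continuous_on_fit_error_dr_integrand:
      "continuous_on (({-1<..<1} \<times> UNIV) \<times> sphere (0::'a) 1)
         (\<lambda>((r, a), \<eta>). q * signed_powr (q - 1) (zonal_kernel \<alpha> n r (\<eta> \<bullet> e) - a)
            * zonal_kernel_dr \<alpha> n r (\<eta> \<bullet> e))"
proof -
  let ?S = "({-1<..<1} \<times> (UNIV :: real set)) \<times> sphere (0::'a) 1"
  have cont: "continuous_on ?S (\<lambda>((r, a), \<eta>). (r, \<eta>))"
    by (simp add: case_prod_unfold) (intro continuous_intros)
  have maps: "(\<lambda>((r, a), \<eta>). (r, \<eta>)) ` ?S \<subseteq> {-1<..<1} \<times> sphere 0 1"
    by auto
  have "continuous_on ?S (\<lambda>((r, a), \<eta>). zonal_kernel \<alpha> n r (\<eta> \<bullet> e))"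
    using continuous_on_compose2[OF continuous_on_zonal_kernel_sphere[OF norm_e] cont maps]
    by (simp add: case_prod_unfold)
  then show shifted: "continuous_on ?S (\<lambda>((r, a), \<eta>). zonal_kernel \<alpha> n r (\<eta> \<bullet> e) - a)"
    by (simp add: case_prod_unfold) (intro continuous_intros)
  show balance: "continuous_on ?S (\<lambda>((r, a), \<eta>). signed_powr (q - 1) (zonal_kernel \<alpha> n r (\<eta> \<bullet> e) - a))"
    using continuous_on_compose2[OF continuous_on_signed_powr shifted] q_gt_1
    by (simp add: case_prod_unfold)
  have "continuous_on ?S (\<lambda>((r, a), \<eta>). zonal_kernel_dr \<alpha> n r (\<eta> \<bullet> e))"
    using continuous_on_compose2[OF continuous_on_zonal_kernel_dr_sphere[OF norm_e] cont maps]
    by (simp add: case_prod_unfold)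
  with balance show "continuous_on ?S (\<lambda>((r, a), \<eta>). q * signed_powr (q - 1) (zonal_kernel \<alpha> n r (\<eta> \<bullet> e) - a)
      * zonal_kernel_dr \<alpha> n r (\<eta> \<bullet> e))"
    by (simp add: case_prod_unfold) (intro continuous_intros)
qed

lemma continuous_on_zonal_slice:
  assumes r: "r \<in> {-1<..<1}" and f: "continuous_on UNIV f"
  shows "continuous_on (sphere (0::'a) 1) (\<lambda>\<eta>. f (zonal_kernel \<alpha> n r (\<eta> \<bullet> e) - a))"
proof -
  have maps: "(\<lambda>\<eta>. ((r, a), \<eta>)) ` sphere (0::'a) 1 \<subseteq> ({-1<..<1} \<times> UNIV) \<times> sphere 0 1"
    using r by auto
  have cont: "continuous_on (sphere (0::'a) 1) (\<lambda>\<eta>. ((r, a), \<eta>))"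
    by (intro continuous_intros)
  have "continuous_on (sphere (0::'a) 1) (\<lambda>\<eta>. zonal_kernel \<alpha> n r (\<eta> \<bullet> e) - a)"
    using continuous_on_compose2[OF continuous_on_shifted_zonal cont maps] by simp
  then show ?thesis
    using continuous_on_compose2[OF f] by blast
qed

lemma
  assumes "r \<in> {-1<..<1}"
  shows integrable_fit_error_integrand:
      "integrable (sphere_sigma :: 'a measure) (\<lambda>\<eta>. \<bar>zonal_kernel \<alpha> n r (\<eta> \<bullet> e) - a\<bar> powr q)"
    and integrable_fit_balance_integrand:
      "integrable (sphere_sigma :: 'a measure) (\<lambda>\<eta>. signed_powr (q - 1) (zonal_kernel \<alpha> n r (\<eta> \<bullet> e) - a))"
  using continuous_on_abs_powr[of q] continuous_on_signed_powr[of "q - 1"] q_gt_1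
  by (auto intro!: integrable_sphere_sigma_continuous continuous_on_zonal_slice[OF assms])

lemma continuous_on_fit_balance: "continuous_on ({-1<..<1} \<times> UNIV) (\<lambda>(r, a). fit_balance r a)"
  unfolding fit_balance_def case_prod_beta'
  by (rule continuous_on_sphere_integral) (use continuous_on_fit_balance_integrand in \<open>simp add: case_prod_unfold\<close>)

lemma continuous_on_fit_error_dr: "continuous_on ({-1<..<1} \<times> UNIV) (\<lambda>(r, a). fit_error_dr r a)"
  unfolding fit_error_dr_def case_prod_beta'
  by (rule continuous_on_sphere_integral) (use continuous_on_fit_error_dr_integrand in \<open>simp add: case_prod_unfold\<close>)

lemma has_real_derivative_fit_error:
  assumes r: "r \<in> {-1<..<1}"
  shows "((\<lambda>r. fit_error r a) has_real_derivative fit_error_dr r a) (at r)"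
  unfolding fit_error_def fit_error_dr_def
proof (rule has_real_derivative_sphere_integral[OF open_greaterThanLessThan r])
  have maps: "(\<lambda>(s, \<eta>). ((s, a), \<eta>)) ` ({-1<..<1} \<times> sphere (0::'a) 1) \<subseteq> ({-1<..<1} \<times> UNIV) \<times> sphere 0 1"
    by auto
  have cont: "continuous_on ({-1<..<1} \<times> sphere (0::'a) 1) (\<lambda>(s, \<eta>). ((s, a), \<eta>))"
    by (simp add: case_prod_unfold) (intro continuous_intros)
  show "continuous_on ({-1<..<1} \<times> sphere 0 1) (\<lambda>(s, \<eta>). q * signed_powr (q - 1) (zonal_kernel \<alpha> n s (\<eta> \<bullet> e) - a)
      * zonal_kernel_dr \<alpha> n s (\<eta> \<bullet> e))"
    using continuous_on_compose2[OF continuous_on_fit_error_dr_integrand cont maps]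
    by (simp add: case_prod_unfold)
  show "continuous_on (sphere 0 1) (\<lambda>\<eta>. \<bar>zonal_kernel \<alpha> n s (\<eta> \<bullet> e) - a\<bar> powr q)"
    if "s \<in> {-1<..<1}" for s
    using q_gt_1 by (intro continuous_on_zonal_slice[OF that] continuous_on_abs_powr) simp
  show "((\<lambda>s. \<bar>zonal_kernel \<alpha> n s (\<eta> \<bullet> e) - a\<bar> powr q) has_real_derivative
      q * signed_powr (q - 1) (zonal_kernel \<alpha> n s (\<eta> \<bullet> e) - a) * zonal_kernel_dr \<alpha> n s (\<eta> \<bullet> e)) (at s)"
    if "s \<in> {-1<..<1}" "\<eta> \<in> sphere 0 1" for s \<eta>
  proof -
    have "\<bar>s\<bar> < 1" "\<bar>\<eta> \<bullet> e\<bar> \<le> 1"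
      using that Cauchy_Schwarz_ineq2[of \<eta> e] norm_e by auto
    from has_real_derivative_zonal_kernel[OF this]
    have "((\<lambda>s. zonal_kernel \<alpha> n s (\<eta> \<bullet> e) - a) has_real_derivative zonal_kernel_dr \<alpha> n s (\<eta> \<bullet> e)) (at s)"
      by (auto intro!: derivative_eq_intros)
    from DERIV_chain2[OF has_real_derivative_abs_powr[OF q_gt_1] this] show ?thesis
      by simp
  qed
qed

lemma fit_balance_strict_antimono:
  assumes r: "r \<in> {-1<..<1}" and ab: "a < b"
  shows "fit_balance r b < fit_balance r a"
  unfolding fit_balance_def
  by (rule finite_measure.integral_less_AE_space[OF finite_measure_sphere_sigma
        integrable_fit_balance_integrand[OF r] integrable_fit_balance_integrand[OF r] _
        emeasure_space_sphere_sigma_nonzero])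
     (use ab q_gt_1 in \<open>auto intro!: AE_I2 signed_powr_strict_mono\<close>)

lemma fit_balance_at_zero_pos:
  assumes r: "r \<in> {-1<..<1}"
  shows "fit_balance r 0 > 0"
proof -
  have "(\<integral>\<eta>. 0 \<partial>(sphere_sigma :: 'a measure)) < fit_balance r 0"
    unfolding fit_balance_def
    by (rule finite_measure.integral_less_AE_space[OF finite_measure_sphere_sigma _
          integrable_fit_balance_integrand[OF r] _ emeasure_space_sphere_sigma_nonzero])
       (auto intro!: AE_I2 signed_powr_pos zonal_kernel_sphere_pos[OF r])
  then show ?thesis by simp
qed

lemma fit_balance_neg:
  assumes r: "r \<in> {-1<..<1}"
  obtains b where "b > 0" "fit_balance r b < 0"
proof -
  obtain B where B: "B \<ge> 0" "\<And>\<eta>. \<eta> \<in> sphere (0::'a) 1 \<Longrightarrow> zonal_kernel \<alpha> n r (\<eta> \<bullet> e) \<le> B"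
    using continuous_on_compact_bound[OF compact_sphere continuous_on_zonal_slice[OF r continuous_on_id, of 0]]
    by (metis abs_le_D1 diff_zero real_norm_def)
  have "fit_balance r (B + 1) \<le> (\<integral>\<eta>. -1 \<partial>(sphere_sigma :: 'a measure))"
    unfolding fit_balance_def
  proof (rule integral_mono[OF integrable_fit_balance_integrand[OF r]])
    show "integrable (sphere_sigma :: 'a measure) (\<lambda>\<eta>. -1)"
      by (rule finite_measure.integrable_const[OF finite_measure_sphere_sigma])
    show "signed_powr (q - 1) (zonal_kernel \<alpha> n r (\<eta> \<bullet> e) - (B + 1)) \<le> -1"
      if "\<eta> \<in> space sphere_sigma" for \<eta>
      using B(2)[of \<eta>] that q_gt_1 by (intro signed_powr_le_minus_one) auto
  qed
  also have "\<dots> = -1"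
    by (simp add: measure_sphere_sigma_sphere)
  finally show ?thesis
    using B(1) by (intro that[of "B + 1"]) auto
qed

lemma
  assumes r: "r \<in> {-1<..<1}"
  shows fit_balance_best_const: "fit_balance r (best_const r) = 0"
    and best_const_pos: "best_const r > 0"
proof -
  obtain b where b: "b > 0" "fit_balance r b < 0"
    using fit_balance_neg[OF r] .
  have "(\<lambda>a. (r, a)) ` {0..b} \<subseteq> {-1<..<1} \<times> UNIV"
    using r by auto
  from continuous_on_compose2[OF continuous_on_fit_balance
      continuous_on_Pair[OF continuous_on_const continuous_on_id] this]
  have "continuous_on {0..b} (fit_balance r)"
    by simp
  then obtain a where a: "0 \<le> a" "a \<le> b" "fit_balance r a = 0"
    using IVT2'[of "fit_balance r" b 0 0] b fit_balance_at_zero_pos[OF r] by force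
  moreover have "a' = a" if "fit_balance r a' = 0" for a'
    using fit_balance_strict_antimono[OF r, of a a'] fit_balance_strict_antimono[OF r, of a' a] that a(3)
    by (cases a a' rule: linorder_cases) auto
  ultimately have "best_const r = a"
    unfolding best_const_def by blast
  with a show "fit_balance r (best_const r) = 0"
    by simp
  show "best_const r > 0"
    using \<open>best_const r = a\<close> a fit_balance_at_zero_pos[OF r] by (cases "a = 0") auto
qed

lemma fit_error_nonneg: "fit_error r a \<ge> 0"
  unfolding fit_error_def by (rule integral_nonneg_AE) simp

lemma fit_error_best_const_le:
  assumes r: "r \<in> {-1<..<1}"
  shows "fit_error r (best_const r) \<le> fit_error r b"
proof -
  let ?A = "best_const r"
  let ?K = "\<lambda>\<eta>::'a. zonal_kernel \<alpha> n r (\<eta> \<bullet> e)"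
  \<comment> \<open>integrate the tangent inequality of \<open>\<bar>s\<bar> powr q\<close> at \<open>K - A\<close>; the linear term is \<open>fit_balance r A = 0\<close>\<close>
  have "fit_error r ?A + q * (?A - b) * fit_balance r ?A
      = (\<integral>\<eta>. \<bar>?K \<eta> - ?A\<bar> powr q + q * (?A - b) * signed_powr (q - 1) (?K \<eta> - ?A) \<partial>sphere_sigma)"
    unfolding fit_error_def fit_balance_def
    using integrable_fit_error_integrand[OF r] integrable_fit_balance_integrand[OF r] by simp
  also have "\<dots> \<le> fit_error r b"
    unfolding fit_error_def
  proof (rule integral_mono)
    show "integrable sphere_sigma (\<lambda>\<eta>. \<bar>?K \<eta> - ?A\<bar> powr q + q * (?A - b) * signed_powr (q - 1) (?K \<eta> - ?A))"
      using integrable_fit_error_integrand[OF r] integrable_fit_balance_integrand[OF r] by simp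
    show "integrable sphere_sigma (\<lambda>\<eta>. \<bar>?K \<eta> - b\<bar> powr q)"
      by (rule integrable_fit_error_integrand[OF r])
    show "\<bar>?K \<eta> - ?A\<bar> powr q + q * (?A - b) * signed_powr (q - 1) (?K \<eta> - ?A) \<le> \<bar>?K \<eta> - b\<bar> powr q" for \<eta>
      using abs_powr_above_tangent[OF q_gt_1, of "?K \<eta> - ?A" "?K \<eta> - b"] by (simp add: algebra_simps)
  qed
  finally show ?thesis
    using fit_balance_best_const[OF r] by simp
qed

lemma min_fit_error_origin: "min_fit_error 0 = 0"
proof -
  have "min_fit_error 0 \<le> fit_error 0 (C_const n \<alpha>)"
    unfolding min_fit_error_def by (rule fit_error_best_const_le) simp
  also have "fit_error 0 (C_const n \<alpha>) = 0"
    by (simp add: fit_error_def)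
  finally show ?thesis
    using fit_error_nonneg unfolding min_fit_error_def by (metis order.antisym)
qed

lemma isCont_fit_balance: "r0 \<in> {-1<..<1} \<Longrightarrow> isCont (\<lambda>r. fit_balance r c) r0"
proof -
  assume r0: "r0 \<in> {-1<..<1}"
  have "(\<lambda>r. (r, c)) ` {-1<..<1} \<subseteq> {-1<..<1} \<times> UNIV"
    by auto
  from continuous_on_compose2[OF continuous_on_fit_balance
      continuous_on_Pair[OF continuous_on_id continuous_on_const] this]
  have "continuous_on {-1<..<1} (\<lambda>r. fit_balance r c)"
    by simp
  with r0 show ?thesis
    using continuous_on_eq_continuous_at[OF open_greaterThanLessThan] by blast
qed

lemma isCont_best_const:
  assumes r0: "r0 \<in> {-1<..<1}"
  shows "isCont best_const r0"
  unfolding isCont_def tendsto_iff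
proof (intro allI impI)
  fix \<epsilon> :: real assume "\<epsilon> > 0"
  define A0 where "A0 = best_const r0"
  \<comment> \<open>the signs of the balance at \<open>A0 \<plusminus> \<epsilon>\<close> persist near \<open>r0\<close> and trap the zero of the balance\<close>
  have "fit_balance r0 (A0 + \<epsilon>) < 0" "fit_balance r0 (A0 - \<epsilon>) > 0"
    using fit_balance_strict_antimono[OF r0, of A0 "A0 + \<epsilon>"] fit_balance_strict_antimono[OF r0, of "A0 - \<epsilon>" A0]
      fit_balance_best_const[OF r0] \<open>\<epsilon> > 0\<close>
    by (simp_all add: A0_def)
  then have "eventually (\<lambda>r. fit_balance r (A0 + \<epsilon>) < 0) (at r0)"
    "eventually (\<lambda>r. fit_balance r (A0 - \<epsilon>) > 0) (at r0)"
    using isCont_fit_balance[OF r0, unfolded isCont_def] order_tendstoD by blast+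
  moreover have "eventually (\<lambda>r. r \<in> {-1<..<1}) (at r0)"
    using r0 by (intro eventually_at_in_open') auto
  ultimately show "eventually (\<lambda>r. dist (best_const r) (best_const r0) < \<epsilon>) (at r0)"
  proof eventually_elim
    case (elim r)
    have "\<not> best_const r \<ge> A0 + \<epsilon>" "\<not> best_const r \<le> A0 - \<epsilon>"
      using fit_balance_strict_antimono[OF elim(3), of "A0 + \<epsilon>" "best_const r"]
        fit_balance_strict_antimono[OF elim(3), of "best_const r" "A0 - \<epsilon>"]
        fit_balance_best_const[OF elim(3)] elim(1,2)
      by (auto simp: le_less)
    then show ?case
      by (simp add: A0_def dist_real_def abs_less_iff)
  qed
qed

lemma continuous_on_fit_error_dr_best_const:
  "continuous_on {-1<..<1} (\<lambda>r. fit_error_dr r (best_const r))"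
proof -
  have "continuous_on {-1<..<1} (\<lambda>r. (r, best_const r))"
    using isCont_best_const by (intro continuous_intros continuous_at_imp_continuous_on) auto
  from continuous_on_compose2[OF continuous_on_fit_error_dr this]
  show ?thesis by auto
qed

lemma fit_error_mean_value:
  assumes y: "y \<in> {-1<..<1}" and r0: "r0 \<in> {-1<..<1}" and "y \<noteq> r0"
  obtains \<xi> where "\<xi> \<in> {-1<..<1}" "\<bar>\<xi> - r0\<bar> < \<bar>y - r0\<bar>"
    "fit_error y b - fit_error r0 b = (y - r0) * fit_error_dr \<xi> b"
proof (cases "y < r0")
  case True
  then obtain z where "y < z" "z < r0" "fit_error r0 b - fit_error y b = (r0 - y) * fit_error_dr z b"
    using MVT2[of y r0 "\<lambda>s. fit_error s b" "\<lambda>s. fit_error_dr s b"] has_real_derivative_fit_error y r0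
    by force
  with y r0 show ?thesis by (intro that[of z]) (auto simp: algebra_simps)
next
  case False
  with \<open>y \<noteq> r0\<close> obtain z where "r0 < z" "z < y" "fit_error y b - fit_error r0 b = (y - r0) * fit_error_dr z b"
    using MVT2[of r0 y "\<lambda>s. fit_error s b" "\<lambda>s. fit_error_dr s b"] has_real_derivative_fit_error y r0
    by force
  with y r0 show ?thesis by (intro that[of z]) auto
qed

lemma has_real_derivative_min_fit_error:
  assumes r0: "r0 \<in> {-1<..<1}"
  shows "(min_fit_error has_real_derivative fit_error_dr r0 (best_const r0)) (at r0)"
proof -
  define A0 D where "A0 = best_const r0" and "D = fit_error_dr r0 A0"
  \<comment> \<open>Envelope argument: the difference quotient of \<open>min_fit_error\<close> is squeezed between that of
    \<open>fit_error \<cdot> A0\<close> and a mean value of \<open>fit_error_dr\<close> near \<open>(r0, A0)\<close>.\<close>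
  have "((\<lambda>y. (min_fit_error y - min_fit_error r0) / (y - r0)) \<longlongrightarrow> D) (at r0)"
    unfolding tendsto_iff
  proof (intro allI impI)
    fix \<epsilon> :: real assume "\<epsilon> > 0"
    have "((\<lambda>y. (fit_error y A0 - fit_error r0 A0) / (y - r0)) \<longlongrightarrow> D) (at r0)"
      using has_real_derivative_fit_error[OF r0] unfolding has_field_derivative_iff D_def .
    then have upper: "eventually (\<lambda>y. \<bar>(fit_error y A0 - fit_error r0 A0) / (y - r0) - D\<bar> < \<epsilon>) (at r0)"
      using \<open>\<epsilon> > 0\<close> unfolding tendsto_iff dist_real_def by blast
    obtain \<delta> where "\<delta> > 0" and \<delta>: "\<And>z. z \<in> {-1<..<1} \<times> UNIV \<Longrightarrow> dist z (r0, A0) < \<delta> \<Longrightarrow>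
        \<bar>fit_error_dr (fst z) (snd z) - D\<bar> < \<epsilon>"
      using continuous_on_fit_error_dr[unfolded continuous_on_iff] r0 \<open>\<epsilon> > 0\<close>
      by (force simp: D_def dist_real_def case_prod_unfold)
    have "eventually (\<lambda>y. dist (best_const y) A0 < \<delta>/2) (at r0)"
      using isCont_best_const[OF r0] half_gt_zero[OF \<open>\<delta> > 0\<close>] unfolding isCont_def tendsto_iff A0_def
      by blast
    moreover have "eventually (\<lambda>y. dist y r0 < \<delta>/2) (at r0)"
      unfolding eventually_at using \<open>\<delta> > 0\<close> by (intro exI[of _ "\<delta>/2"]) auto
    moreover have "eventually (\<lambda>y. y \<in> {-1<..<1} - {r0}) (at r0)"
      using r0 by (intro eventually_at_in_open) auto
    ultimately show "eventually (\<lambda>y. dist ((min_fit_error y - min_fit_error r0) / (y - r0)) D < \<epsilon>) (at r0)"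
      using upper
    proof eventually_elim
      case (elim y)
      define Ay where "Ay = best_const y"
      have y: "y \<in> {-1<..<1}" "y \<noteq> r0"
        using elim(3) by auto
      obtain \<xi> where \<xi>: "\<xi> \<in> {-1<..<1}" "\<bar>\<xi> - r0\<bar> < \<bar>y - r0\<bar>"
        "fit_error y Ay - fit_error r0 Ay = (y - r0) * fit_error_dr \<xi> Ay"
        using fit_error_mean_value[OF y(1) r0 y(2)] by blast
      have "dist (\<xi>, Ay) (r0, A0) \<le> \<bar>\<xi> - r0\<bar> + \<bar>Ay - A0\<bar>"
        using sqrt_sum_squares_le_sum_abs by (simp add: dist_Pair_Pair dist_real_def)
      also have "\<dots> < \<delta>"
        using \<xi>(2) elim(1,2) by (simp add: Ay_def dist_real_def)
      finally have lower: "\<bar>fit_error_dr \<xi> Ay - D\<bar> < \<epsilon>"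
        using \<delta>[of "(\<xi>, Ay)"] \<xi>(1) by simp
      define Q U where "Q = (min_fit_error y - min_fit_error r0) / (y - r0)"
        and "U = (fit_error y A0 - fit_error r0 A0) / (y - r0)"
      have QU: "Q * (y - r0) = min_fit_error y - min_fit_error r0"
        "U * (y - r0) = fit_error y A0 - fit_error r0 A0"
        using y(2) by (simp_all add: Q_def U_def)
      have "fit_error_dr \<xi> Ay * (y - r0) \<le> Q * (y - r0)"
        unfolding QU using \<xi>(3) fit_error_best_const_le[OF r0, of Ay]
        by (simp add: min_fit_error_def Ay_def A0_def algebra_simps)
      moreover have "Q * (y - r0) \<le> U * (y - r0)"
        unfolding QU using fit_error_best_const_le[OF y(1), of A0] by (simp add: min_fit_error_def A0_def)
      ultimately have "fit_error_dr \<xi> Ay \<le> Q \<and> Q \<le> U \<or> U \<le> Q \<and> Q \<le> fit_error_dr \<xi> Ay"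
        using y(2) by (cases "y < r0") (auto simp: mult_le_cancel_right)
      then have "\<bar>Q - D\<bar> < \<epsilon>"
        using lower elim(4) by (auto simp: U_def abs_less_iff)
      then show ?case
        by (simp add: Q_def dist_real_def)
    qed
  qed
  then show ?thesis
    unfolding has_field_derivative_iff D_def A0_def .
qed

lemma min_fit_error_pos:
  assumes r: "r \<in> {-1<..<1}" "r \<noteq> 0"
  shows "min_fit_error r > 0"
proof -
  define A where "A = best_const r"
  have "real n + 2 * \<alpha> > 0"
    using n_ge_1 alpha_gt by linarith
  then have "zonal_kernel \<alpha> n r (e \<bullet> e) \<noteq> zonal_kernel \<alpha> n r ((- e) \<bullet> e)"
    using zonal_kernel_poles_differ[OF C_const_n_pos, of r] r norm_e by (auto simp: norm_eq_1 abs_less_iff)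
  then obtain \<eta>0 where \<eta>0: "\<eta>0 \<in> sphere (0::'a) 1" "zonal_kernel \<alpha> n r (\<eta>0 \<bullet> e) \<noteq> A"
    using norm_e by (metis mem_sphere_0 norm_minus_cancel)
  have "(\<integral>\<eta>. \<bar>zonal_kernel \<alpha> n r (\<eta> \<bullet> e) - A\<bar> powr q \<partial>(sphere_sigma :: 'a measure)) > 0"
    by (rule integral_sphere_sigma_pos[OF _ _ \<eta>0(1)])
       (use \<eta>0(2) q_gt_1 in \<open>auto intro!: continuous_on_zonal_slice[OF r(1)] continuous_on_abs_powr\<close>)
  then show ?thesis
    by (simp add: min_fit_error_def fit_error_def A_def)
qed

end

section \<open>The sharp estimate\<close>

lemma zonal_fit_e_last:
  "\<alpha> > -1/2 \<Longrightarrow> q > 1 \<Longrightarrow> zonal_fit \<alpha> q CARD('n) (e_last :: (real, 'n::{finite,wellorder}) vec)"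
  by unfold_locales (auto simp: e_last_def Suc_le_eq)

lemma P_transform_origin:
  fixes f :: "(real, 'n::finite) vec \<Rightarrow> (real, 'n) vec"
  shows "P_transform \<alpha> f 0 = C_const CARD('n) \<alpha> *\<^sub>R integral\<^sup>L sphere_sigma f"
proof -
  have "P_transform \<alpha> f 0 = (\<integral>\<zeta>. C_const CARD('n) \<alpha> *\<^sub>R f \<zeta> \<partial>sphere_sigma)"
    unfolding P_transform_def
    by (rule Bochner_Integration.integral_cong[OF refl]) (simp add: P_kernel_at_origin)
  then show ?thesis by simp
qed

context
  fixes \<alpha> p :: real
  assumes alpha: "\<alpha> > -1/2" and p: "p > 1"
begin

lemma conjugate_exponent: "p / (p - 1) > 1" "1 / (p / (p - 1)) = 1 - 1 / p" "(p / (p - 1) - 1) * p = p / (p - 1)"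
  using p by (auto simp: field_simps)

lemma G_fun_eq_min_fit_error:
  assumes r: "0 \<le> r" "r < 1"
  shows "G_fun \<alpha> p r TYPE('n::{finite,wellorder})
    = zonal_fit.min_fit_error \<alpha> (p / (p - 1)) CARD('n) (e_last :: (real, 'n) vec) r powr (1 / (p / (p - 1)))"
proof -
  define q where "q = p / (p - 1)"
  interpret zonal_fit \<alpha> q "CARD('n)" "e_last :: (real, 'n) vec"
    using zonal_fit_e_last alpha conjugate_exponent(1) by (simp add: q_def)
  have r': "r \<in> {-1<..<1}" using r by simp
  have "(\<integral>\<eta>. \<bar>P_kernel \<alpha> (r *\<^sub>R e_last) \<eta> - a\<bar> powr q \<partial>(sphere_sigma :: (real, 'n) vec measure)) = fit_error r a" for a
    unfolding fit_error_def
    by (rule Bochner_Integration.integral_cong[OF refl]) (simp add: P_kernel_zonal e_last_def)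
  then have "G_fun \<alpha> p r TYPE('n) = (INF a\<in>{0..}. fit_error r a powr (1/q))"
    by (simp add: G_fun_def Let_def q_def)
  also have "\<dots> = min_fit_error r powr (1/q)"
    unfolding min_fit_error_def
  proof (rule cInf_eq_minimum)
    show "fit_error r (best_const r) powr (1/q) \<in> (\<lambda>a. fit_error r a powr (1/q)) ` {0..}"
      using best_const_pos[OF r'] by auto
    show "fit_error r (best_const r) powr (1/q) \<le> b" if "b \<in> (\<lambda>a. fit_error r a powr (1/q)) ` {0..}" for b
      using that fit_error_best_const_le[OF r'] fit_error_nonneg q_gt_1 by (auto intro!: powr_mono2)
  qed
  finally show ?thesis by (simp add: q_def)
qed

lemma P_transform_bound:
  fixes f :: "(real, 'n::{finite,wellorder}) vec \<Rightarrow> (real, 'n) vec" and x :: "(real, 'n) vec"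
  assumes f: "in_Lp p f" and u0: "P_transform \<alpha> f 0 = 0" and x: "norm x < 1"
  shows "norm (P_transform \<alpha> f x) \<le> G_fun \<alpha> p (norm x) TYPE('n) * Lp_norm p f"
proof -
  define q where "q = p / (p - 1)"
  interpret zonal_fit \<alpha> q "CARD('n)" "e_last :: (real, 'n) vec"
    using zonal_fit_e_last alpha conjugate_exponent(1) by (simp add: q_def)
  define A where "A = best_const (norm x)"
  have e: "norm (e_last :: (real, 'n) vec) = 1"
    by (simp add: e_last_def)
  have fm: "f \<in> borel_measurable sphere_sigma" and fp: "integrable sphere_sigma (\<lambda>\<zeta>. norm (f \<zeta>) powr p)"
    using f by (auto simp: in_Lp_def)
  have fi: "integrable sphere_sigma f"
    using integrable_if_Lp[OF finite_measure_sphere_sigma _ fm fp] p by simp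
  have "integral\<^sup>L sphere_sigma f = 0"
    using u0 C_const_n_pos by (simp add: P_transform_origin)
  \<comment> \<open>since \<open>f\<close> has mean zero, the constant \<open>A\<close> may be subtracted from the kernel\<close>
  have Pc: "continuous_on (sphere 0 1) (\<lambda>\<zeta>. P_kernel \<alpha> x \<zeta> - A)"
    by (intro continuous_intros continuous_on_P_kernel x)
  then obtain B where "\<And>\<zeta>. \<zeta> \<in> sphere 0 1 \<Longrightarrow> norm (P_kernel \<alpha> x \<zeta> - A) \<le> B"
    using continuous_on_compact_bound[OF compact_sphere] by metis
  then have i1: "integrable sphere_sigma (\<lambda>\<zeta>. (P_kernel \<alpha> x \<zeta> - A) *\<^sub>R f \<zeta>)"
    by (intro integrable_bounded_scaleR[OF fi borel_measurable_sphere_sigma_continuous[OF Pc]]) auto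
  have "P_transform \<alpha> f x = (\<integral>\<zeta>. (P_kernel \<alpha> x \<zeta> - A) *\<^sub>R f \<zeta> + A *\<^sub>R f \<zeta> \<partial>sphere_sigma)"
    unfolding P_transform_def by (simp add: scaleR_left_diff_distrib)
  also have "\<dots> = (\<integral>\<zeta>. (P_kernel \<alpha> x \<zeta> - A) *\<^sub>R f \<zeta> \<partial>sphere_sigma)"
    using i1 fi \<open>integral\<^sup>L sphere_sigma f = 0\<close> by simp
  finally have "norm (P_transform \<alpha> f x) \<le> (\<integral>\<zeta>. \<bar>P_kernel \<alpha> x \<zeta> - A\<bar> * norm (f \<zeta>) \<partial>sphere_sigma)"
    using integral_norm_bound[of sphere_sigma "\<lambda>\<zeta>. (P_kernel \<alpha> x \<zeta> - A) *\<^sub>R f \<zeta>"] by simp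
  also have "\<dots> \<le> (\<integral>\<zeta>. \<bar>P_kernel \<alpha> x \<zeta> - A\<bar> powr q \<partial>sphere_sigma) powr (1/q) * Lp_norm p f"
    unfolding Lp_norm_def
  proof (rule Holder_inequality_nonneg[OF p q_def])
    show "integrable sphere_sigma (\<lambda>\<zeta>. \<bar>P_kernel \<alpha> x \<zeta> - A\<bar> powr q)"
      using continuous_on_compose2[OF continuous_on_abs_powr Pc] q_gt_1
      by (intro integrable_sphere_sigma_continuous) auto
    show "integrable sphere_sigma (\<lambda>\<zeta>. \<bar>P_kernel \<alpha> x \<zeta> - A\<bar> * norm (f \<zeta>))"
      using integrable_norm[OF i1] by simp
  qed (use fp in auto)
  also have "(\<integral>\<zeta>. \<bar>P_kernel \<alpha> x \<zeta> - A\<bar> powr q \<partial>sphere_sigma) = min_fit_error (norm x)"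
    using integral_P_kernel_zonal[OF e x, of "\<lambda>s. \<bar>s - A\<bar> powr q"]
      continuous_on_compose2[OF continuous_on_abs_powr continuous_on_diff[OF continuous_on_id continuous_on_const]] q_gt_1
    by (simp add: min_fit_error_def fit_error_def A_def)
  finally show ?thesis
    using G_fun_eq_min_fit_error[where 'n = 'n, of "norm x"] x by (simp add: q_def)
qed

lemma G_fun_origin: "G_fun \<alpha> p 0 TYPE('n::{finite,wellorder}) = 0"
proof -
  interpret zonal_fit \<alpha> "p / (p - 1)" "CARD('n)" "e_last :: (real, 'n) vec"
    using zonal_fit_e_last alpha conjugate_exponent(1) by simp
  show ?thesis
    using G_fun_eq_min_fit_error[where 'n = 'n, of 0] min_fit_error_origin by simp
qed

lemma G_fun_continuously_differentiable:
  obtains D where "continuous_on {0<..<1} D"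
    "\<And>r. r \<in> {0<..<1} \<Longrightarrow> ((\<lambda>r. G_fun \<alpha> p r TYPE('n::{finite,wellorder})) has_real_derivative D r) (at r)"
proof -
  define q where "q = p / (p - 1)"
  interpret zonal_fit \<alpha> q "CARD('n)" "e_last :: (real, 'n) vec"
    using zonal_fit_e_last alpha conjugate_exponent(1) by (simp add: q_def)
  define D where "D r = 1/q * min_fit_error r powr (1/q - 1) * fit_error_dr r (best_const r)" for r
  have m_pos: "min_fit_error r > 0" if "r \<in> {0<..<1}" for r
    using min_fit_error_pos[of r] that by auto
  have "continuous_on {0<..<1} min_fit_error"
    using DERIV_isCont[OF has_real_derivative_min_fit_error]
    by (intro continuous_at_imp_continuous_on) auto
  then have "continuous_on {0<..<1} D"
    unfolding D_def using m_pos
    by (intro continuous_intros continuous_on_powr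
        continuous_on_subset[OF continuous_on_fit_error_dr_best_const]) force+
  moreover have "((\<lambda>r. G_fun \<alpha> p r TYPE('n)) has_real_derivative D r) (at r)" if r: "r \<in> {0<..<1}" for r
  proof -
    have "((\<lambda>r. min_fit_error r powr (1/q)) has_real_derivative D r) (at r)"
      unfolding D_def using r
      by (intro DERIV_chain2[OF has_real_derivative_powr[OF m_pos[OF r]] has_real_derivative_min_fit_error]) auto
    then show ?thesis
      by (rule has_field_derivative_transform_within_open[where S = "{0<..<1}"])
         (use r G_fun_eq_min_fit_error[where 'n = 'n] in \<open>auto simp: q_def\<close>)
  qed
  ultimately show ?thesis
    using that by blast
qed

lemma P_transform_extremal:
  fixes y :: "(real, 'n::{finite,wellorder}) vec"
  assumes y: "0 < norm y" "norm y < 1"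
  obtains g where "in_Lp p g" "P_transform \<alpha> g 0 = 0" "Lp_norm p g > 0"
    "norm (P_transform \<alpha> g y) = G_fun \<alpha> p (norm y) TYPE('n) * Lp_norm p g"
proof -
  define q where "q = p / (p - 1)"
  interpret zonal_fit \<alpha> q "CARD('n)" "e_last :: (real, 'n) vec"
    using zonal_fit_e_last alpha conjugate_exponent(1) by (simp add: q_def)
  define A where "A = best_const (norm y)"
  define k where "k = (\<lambda>\<zeta>. signed_powr (q - 1) (P_kernel \<alpha> y \<zeta> - A))"
  \<comment> \<open>the equality case of Hoelder's inequality for the kernel \<open>P_kernel \<alpha> y - A\<close>\<close>
  define g where "g = (\<lambda>\<zeta>. k \<zeta> *\<^sub>R (e_last :: (real, 'n) vec))"
  have e: "norm (e_last :: (real, 'n) vec) = 1"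
    by (simp add: e_last_def)
  have r: "norm y \<in> {-1<..<1}"
    using y by (auto simp del: zero_less_norm_iff)
  have shift: "continuous_on UNIV (\<lambda>s::real. s - A)"
    by (intro continuous_intros)
  have sp: "continuous_on UNIV (\<lambda>s. signed_powr (q - 1) (s - A))"
    and ap: "continuous_on UNIV (\<lambda>s. \<bar>s - A\<bar> powr q)"
    using continuous_on_compose2[OF continuous_on_signed_powr shift]
      continuous_on_compose2[OF continuous_on_abs_powr shift] q_gt_1 by auto
  have Pc: "continuous_on (sphere 0 1) (P_kernel \<alpha> y)"
    by (rule continuous_on_P_kernel[OF y(2)])
  have kc: "continuous_on (sphere 0 1) k"
    unfolding k_def using continuous_on_compose2[OF sp Pc] by simp
  have ik: "integrable sphere_sigma k"
    by (rule integrable_sphere_sigma_continuous[OF kc])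
  have ia: "integrable sphere_sigma (\<lambda>\<zeta>. \<bar>P_kernel \<alpha> y \<zeta> - A\<bar> powr q)"
    using continuous_on_compose2[OF ap Pc] by (intro integrable_sphere_sigma_continuous) simp
  have int_k: "integral\<^sup>L sphere_sigma k = 0"
    unfolding k_def using integral_P_kernel_zonal[OF e y(2) sp] fit_balance_best_const[OF r]
    by (simp add: fit_balance_def A_def)
  have int_a: "(\<integral>\<zeta>. \<bar>P_kernel \<alpha> y \<zeta> - A\<bar> powr q \<partial>sphere_sigma) = min_fit_error (norm y)"
    using integral_P_kernel_zonal[OF e y(2) ap] by (simp add: min_fit_error_def fit_error_def A_def)
  have m: "min_fit_error (norm y) > 0"
    using min_fit_error_pos[OF r] y by simp
  have norm_g: "norm (g \<zeta>) powr p = \<bar>P_kernel \<alpha> y \<zeta> - A\<bar> powr q" for \<zeta>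
    using conjugate_exponent(3) by (simp add: g_def k_def e powr_powr q_def)
  have Lp: "Lp_norm p g = min_fit_error (norm y) powr (1/p)"
    unfolding Lp_norm_def norm_g int_a ..
  show ?thesis
  proof (rule that)
    have "continuous_on (sphere 0 1) g"
      unfolding g_def by (intro continuous_intros kc)
    then show "in_Lp p g"
      unfolding in_Lp_def norm_g using ia by (auto intro: borel_measurable_sphere_sigma_continuous)
    show "P_transform \<alpha> g 0 = 0"
      using ik int_k by (simp add: P_transform_origin g_def)
    show "Lp_norm p g > 0"
      using m by (simp add: Lp)
    have "P_kernel \<alpha> y \<zeta> * k \<zeta> = \<bar>P_kernel \<alpha> y \<zeta> - A\<bar> powr q + A * k \<zeta>" for \<zeta>
      using mult_signed_powr[of "P_kernel \<alpha> y \<zeta> - A" q] by (simp add: k_def algebra_simps)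
    then have "P_transform \<alpha> g y = (\<integral>\<zeta>. \<bar>P_kernel \<alpha> y \<zeta> - A\<bar> powr q + A * k \<zeta> \<partial>sphere_sigma) *\<^sub>R e_last"
      using ia ik by (simp add: P_transform_def g_def)
    also have "\<dots> = min_fit_error (norm y) *\<^sub>R e_last"
      using ia ik int_a int_k by simp
    finally have "norm (P_transform \<alpha> g y) = min_fit_error (norm y)"
      using m e by simp
    also have "\<dots> = min_fit_error (norm y) powr (1/q) * min_fit_error (norm y) powr (1/p)"
      using m conjugate_exponent(2) by (simp add: q_def flip: powr_add)
    finally show "norm (P_transform \<alpha> g y) = G_fun \<alpha> p (norm y) TYPE('n) * Lp_norm p g"
      using G_fun_eq_min_fit_error[where 'n = 'n, of "norm y"] y Lp by (simp add: q_def)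
  qed
qed

lemma G_fun_le_bound_constant:
  fixes x :: "(real, 'n::{finite,wellorder}) vec"
  assumes x: "norm x < 1"
    and c: "\<And>g. in_Lp p g \<Longrightarrow> P_transform \<alpha> g 0 = 0 \<Longrightarrow> norm (P_transform \<alpha> g x) \<le> c * Lp_norm p g"
  shows "G_fun \<alpha> p (norm x) TYPE('n) \<le> c"
proof (cases "x = 0")
  case True
  have "0 < norm ((1/2) *\<^sub>R (e_last :: (real, 'n) vec))" "norm ((1/2) *\<^sub>R (e_last :: (real, 'n) vec)) < 1"
    by (simp_all add: e_last_def)
  from P_transform_extremal[OF this] obtain g :: "(real, 'n) vec \<Rightarrow> (real, 'n) vec"
    where "in_Lp p g" "P_transform \<alpha> g 0 = 0" "Lp_norm p g > 0"
    by metis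
  with c[of g] True have "c \<ge> 0"
    by (simp add: zero_le_mult_iff)
  with True show ?thesis
    by (simp add: G_fun_origin)
next
  case False
  then obtain g where "in_Lp p g" "P_transform \<alpha> g 0 = 0" "Lp_norm p g > 0"
    "norm (P_transform \<alpha> g x) = G_fun \<alpha> p (norm x) TYPE('n) * Lp_norm p g"
    using P_transform_extremal[of x] x by auto
  with c[of g] show ?thesis
    by simp
qed

end

theorem lemma3p1:
  fixes \<alpha> p :: real and f :: "real^('n::{finite,wellorder}) \<Rightarrow> real^('n::{finite,wellorder})"
  defines "G \<equiv> (\<lambda>r. G_fun \<alpha> p r TYPE('n::{finite,wellorder}))"
  assumes n3: "CARD('n::{finite,wellorder}) \<ge> 3"
    and alpha: "\<alpha> > -1/2"
    and p: "p > 1"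
    and f: "in_Lp p f"
    and u0: "P_transform \<alpha> f 0 = 0"
  shows "(\<forall>x\<in>ball (0::real^('n::{finite,wellorder})) 1. norm (P_transform \<alpha> f x) \<le> G (norm x) * Lp_norm p f)
    \<and> G 0 = 0
    \<and> (\<forall>r\<in>{0<..<1}. G differentiable (at r))
    \<and> continuous_on {0<..<1} (deriv G)
    \<and> (\<forall>x\<in>ball (0::real^('n::{finite,wellorder})) 1. \<forall>c::real.
         (\<forall>g. in_Lp p g \<and> P_transform \<alpha> g 0 = 0
              \<longrightarrow> norm (P_transform \<alpha> g x) \<le> c * Lp_norm p g)
         \<longrightarrow> G (norm x) \<le> c)"
proof -
  obtain D where D: "continuous_on {0<..<1} D" "\<And>r. r \<in> {0<..<1} \<Longrightarrow> (G has_real_derivative D r) (at r)"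
    using G_fun_continuously_differentiable[OF alpha p, where 'n = 'n] unfolding G_def by blast
  have "continuous_on {0<..<1} (deriv G)"
    using D by (metis (mono_tags, lifting) DERIV_imp_deriv continuous_on_cong)
  moreover have "\<forall>r\<in>{0<..<1}. G differentiable (at r)"
    using D(2) real_differentiable_def by blast
  ultimately show ?thesis
    using P_transform_bound[OF alpha p f u0] G_fun_origin[OF alpha p] G_fun_le_bound_constant[OF alpha p, where 'n = 'n]
    unfolding G_def by auto
qed

end
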